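(* Let $H$ satisfy Condition (H). If $(x,p)\in\mathbb K\times\mathbb R$ is such that $t_{x,p}<\infty$, then $\lim_{t\uparrow t_{x,p}}(X_t^{x,p},P_t^{x,p})$ exists and is either $(\partial_-,-\infty)$ or $(\partial_+,+\infty)$.
   Context: $\mathbb K$ is either $\mathbb R$ or $[-1,1]$, with interior $\mathbb K^\circ$; $\partial_-=-\infty,\partial_+=+\infty$ if $\mathbb K=\mathbb R$ and $\partial_-=-1,\partial_+=1$ if $\mathbb K=[-1,1]$. The Lagrangian is $\mathcal L(x,v)=\sup_p(pv-H(x,p))$. The Hamilton equations are $\dot X=\partial_pH(X,P)$, $\dot P=-\partial_xH(X,P)$; $(X_s^{x,p},P_s^{x,p})$ is the solution from $(x,p)$ on its maximal interval of existence $[0,t_{x,p})$ (for $\mathbb K=[-1,1]$, maximality within $[-1,1]\times\mathbb R$). Condition (H) on $H:\mathbb K\times\mathbb R\to\mathbb R$: $H(x,0)=0$ for all $x$, and (H1) $H$ is $C^2$ with $\partial_p^2H>0$ on $\mathbb K\times\mathbb R$; if $\mathbb K=[-1,1]$, $H$ is the restriction of a $C^2$ function on $(-1-\epsilon,1+\epsilon)\times\mathbb R$ for some $\epsilon>0$. (H2) for every compact $K\subseteq\mathbb K^\circ$ there is $\theta_K:[0,\infty)\to[0,\infty)$ with $\theta_K(r)/r\to\infty$ as $r\to\infty$; for every $M\ge0$ a constant $k_M$ with $\theta_K(r+m)\le k_M(1+\theta_K(r))$ for all $m\in[0,M]$, $r\ge0$; constants $c_K,C_K$ with $\mathcal L(x,v)\ge\theta_K(|v|)-c_K$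 and $|\partial_x\mathcal L(x,v)|+|\partial_v\mathcal L(x,v)|\le C_K\theta_K(|v|)$ for all $x\in K,v\in\mathbb R$. (H3) for each compact $K\subseteq\mathbb K^\circ$, $\lim_{|p|\to\infty}\inf_{x\in K}H(x,p)/|p|=\infty$; if $\mathbb K=[-1,1]$ moreover $\lim_{p\to\infty}H(-1,p)/p=\infty$ and $\lim_{p\to-\infty}H(1,p)/(-p)=\infty$. (H4) $\lim_{x\to\partial_-}\operatorname{argmin}_pH(x,p)=-\infty$ and $\lim_{x\to\partial_+}\operatorname{argmin}_pH(x,p)=+\infty$. (H5) there are $(y_n^+,q_n^+)\in\mathbb K^\circ\times(0,\infty)$ converging to $(\partial_+,+\infty)$ with $\partial_pH(y_n^+,q)\ge0$ for $q\ge q_n^+$ and $-\partial_xH(y,q_n^+)\ge0$ for $y\ge y_n^+$, and $(y_n^-,q_n^-)\in\mathbb K^\circ\times(-\infty,0)$ converging to $(\partial_-,-\infty)$ with $\partial_pH(y_n^-,q)\le0$ for $q\le q_n^-$ and $-\partial_xH(y,q_n^-)\le0$ for $y\le y_n^-$. *)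

theory Defs
  imports "HOL-Analysis.Analysis"
begin

definition Kset :: "bool \<Rightarrow> real set" where
  "Kset b = (if b then {-1..1} else UNIV)"

text \<open>Filters/targets for x tending to the lower / upper end of K (within K),
  and the limit objects partial_- , partial_+ as target filters.\<close>
definition lowerF :: "bool \<Rightarrow> real filter" where
  "lowerF b = (if b then at (-1) within {-1..1} else at_bot)"
definition upperF :: "bool \<Rightarrow> real filter" where
  "upperF b = (if b then at 1 within {-1..1} else at_top)"
definition lowerLim :: "bool \<Rightarrow> real filter" where
  "lowerLim b = (if b then nhds (-1) else at_bot)"
definition upperLim :: "bool \<Rightarrow> real filter" where
  "upperLim b = (if b then nhds 1 else at_top)"

definition pdx :: "(real \<Rightarrow> real \<Rightarrow> real) \<Rightarrow> real \<Rightarrow> real \<Rightarrow> real" where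
  "pdx f x p = deriv (\<lambda>y. f y p) x"
definition pdp :: "(real \<Rightarrow> real \<Rightarrow> real) \<Rightarrow> real \<Rightarrow> real \<Rightarrow> real" where
  "pdp f x p = deriv (\<lambda>q. f x q) p"

definition C1_on :: "(real \<times> real) set \<Rightarrow> (real \<Rightarrow> real \<Rightarrow> real) \<Rightarrow> bool" where
  "C1_on U f \<longleftrightarrow>
     (\<forall>z\<in>U. ((\<lambda>w. f (fst w) (snd w)) has_derivative
               (\<lambda>h. pdx f (fst z) (snd z) * fst h + pdp f (fst z) (snd z) * snd h)) (at z))
   \<and> continuous_on U (\<lambda>w. pdx f (fst w) (snd w))
   \<and> continuous_on U (\<lambda>w. pdp f (fst w) (snd w))"

definition C2_on :: "(real \<times> real) set \<Rightarrow> (real \<Rightarrow> real \<Rightarrow> real) \<Rightarrow> bool" where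
  "C2_on U f \<longleftrightarrow> C1_on U f \<and> C1_on U (pdx f) \<and> C1_on U (pdp f)"

definition Lag :: "(real \<Rightarrow> real \<Rightarrow> real) \<Rightarrow> real \<Rightarrow> real \<Rightarrow> real" where
  "Lag H x v = (SUP p. p * v - H x p)"

definition condH0 :: "bool \<Rightarrow> (real \<Rightarrow> real \<Rightarrow> real) \<Rightarrow> bool" where
  "condH0 b H \<longleftrightarrow> (\<forall>x\<in>Kset b. H x 0 = 0)"

definition condH1 :: "bool \<Rightarrow> (real \<Rightarrow> real \<Rightarrow> real) \<Rightarrow> bool" where
  "condH1 b H \<longleftrightarrow>
     (if b then (\<exists>\<epsilon>>0. C2_on ({-1-\<epsilon><..<1+\<epsilon>} \<times> UNIV) H)
      else C2_on UNIV H)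
   \<and> (\<forall>x\<in>Kset b. \<forall>p. pdp (pdp H) x p > 0)"

definition condH2 :: "bool \<Rightarrow> (real \<Rightarrow> real \<Rightarrow> real) \<Rightarrow> bool" where
  "condH2 b H \<longleftrightarrow>
    (\<forall>K. compact K \<and> K \<subseteq> interior (Kset b) \<longrightarrow>
      (\<exists>\<theta>::real\<Rightarrow>real. (\<forall>r\<ge>0. \<theta> r \<ge> 0)
         \<and> filterlim (\<lambda>r. \<theta> r / r) at_top at_top
         \<and> (\<forall>M\<ge>0. \<exists>k. \<forall>m\<in>{0..M}. \<forall>r\<ge>0. \<theta> (r + m) \<le> k * (1 + \<theta> r))
         \<and> (\<exists>c C. \<forall>x\<in>K. \<forall>v. Lag H x v \<ge> \<theta> \<bar>v\<bar> - c
                 \<and> \<bar>pdx (Lag H) x v\<bar> + \<bar>pdp (Lag H) x v\<bar> \<le> C * \<theta> \<bar>v\<bar>)))"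

definition condH3 :: "bool \<Rightarrow> (real \<Rightarrow> real \<Rightarrow> real) \<Rightarrow> bool" where
  "condH3 b H \<longleftrightarrow>
    (\<forall>K. compact K \<and> K \<noteq> {} \<and> K \<subseteq> interior (Kset b) \<longrightarrow>
       filterlim (\<lambda>p. (INF x\<in>K. H x p / \<bar>p\<bar>)) at_top at_infinity)
   \<and> (b \<longrightarrow> filterlim (\<lambda>p. H (-1) p / p) at_top at_top
          \<and> filterlim (\<lambda>p. H 1 p / (- p)) at_top at_bot)"

definition condH4 :: "bool \<Rightarrow> (real \<Rightarrow> real \<Rightarrow> real) \<Rightarrow> bool" where
  "condH4 b H \<longleftrightarrow>
     filterlim (\<lambda>x. ARG_MIN (H x) p. True) at_bot (lowerF b)
   \<and> filterlim (\<lambda>x. ARG_MIN (H x) p. True) at_top (upperF b)"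

definition condH5 :: "bool \<Rightarrow> (real \<Rightarrow> real \<Rightarrow> real) \<Rightarrow> bool" where
  "condH5 b H \<longleftrightarrow>
    (\<exists>y q :: nat \<Rightarrow> real.
       (\<forall>n. y n \<in> interior (Kset b) \<and> q n > 0)
     \<and> filterlim y (upperLim b) sequentially \<and> filterlim q at_top sequentially
     \<and> (\<forall>n. \<forall>r\<ge>q n. pdp H (y n) r \<ge> 0)
     \<and> (\<forall>n. \<forall>z\<in>Kset b. z \<ge> y n \<longrightarrow> - pdx H z (q n) \<ge> 0))
  \<and> (\<exists>y q :: nat \<Rightarrow> real.
       (\<forall>n. y n \<in> interior (Kset b) \<and> q n < 0)
     \<and> filterlim y (lowerLim b) sequentially \<and> filterlim q at_bot sequentially
     \<and> (\<forall>n. \<forall>r\<le>q n. pdp H (y n) r \<le> 0)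
     \<and> (\<forall>n. \<forall>z\<in>Kset b. z \<le> y n \<longrightarrow> - pdx H z (q n) \<le> 0))"

definition conditionH :: "bool \<Rightarrow> (real \<Rightarrow> real \<Rightarrow> real) \<Rightarrow> bool" where
  "conditionH b H \<longleftrightarrow> condH0 b H \<and> condH1 b H \<and> condH2 b H \<and> condH3 b H
                      \<and> condH4 b H \<and> condH5 b H"

definition ham_sol :: "bool \<Rightarrow> (real \<Rightarrow> real \<Rightarrow> real) \<Rightarrow> real \<Rightarrow> real \<Rightarrow> real
                        \<Rightarrow> (real \<Rightarrow> real) \<Rightarrow> (real \<Rightarrow> real) \<Rightarrow> bool" where
  "ham_sol b H x p T X P \<longleftrightarrow> X 0 = x \<and> P 0 = p \<and>
     (\<forall>s\<in>{0..<T}. X s \<in> Kset b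
        \<and> (X has_real_derivative pdp H (X s) (P s)) (at s within {0..<T})
        \<and> (P has_real_derivative - pdx H (X s) (P s)) (at s within {0..<T}))"

definition ham_maxsol :: "bool \<Rightarrow> (real \<Rightarrow> real \<Rightarrow> real) \<Rightarrow> real \<Rightarrow> real \<Rightarrow> real
                        \<Rightarrow> (real \<Rightarrow> real) \<Rightarrow> (real \<Rightarrow> real) \<Rightarrow> bool" where
  "ham_maxsol b H x p T X P \<longleftrightarrow> ham_sol b H x p T X P \<and>
     \<not> (\<exists>T' X' P'. T' > T \<and> ham_sol b H x p T' X' P' \<and>
                   (\<forall>s\<in>{0..<T}. X' s = X s \<and> P' s = P s))"

end

theory Submission
  imports Defs
begin

text \<open>Energy \<open>H(X, P)\<close> is conserved along the flow. If the trajectory had a limit at \<open>T\<close>, it could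
  be continued beyond \<open>T\<close>: from an interior limit point by the local Picard solution, and at an end
  of \<open>[-1, 1]\<close> because condition (H4) forces the trajectory to rest there, where a stationary solution
  continues it. If it stayed in a compact box near \<open>T\<close>, its bounded speed would give it such a
  limit, and it cannot keep returning to a box while leaving a larger one, since crossing the gap
  takes a fixed amount of time. Hence \<open>(X, P)\<close> leaves every compact set. For \<open>K = [-1, 1]\<close> this
  means \<open>\<bar>P\<bar> \<rightarrow> \<infinity>\<close>, and since \<open>H\<close> grows superlinearly in \<open>p\<close> except near the end of \<open>K\<close>
  singled out by the sign of \<open>p\<close> (H3), energy conservation drives \<open>X\<close> to that end. For \<open>K = \<real>\<close> it
  means \<open>\<bar>X\<bar> \<rightarrow> \<infinity>\<close>; far out the minimiser of \<open>H(x, \<cdot>)\<close> is large (H4), so \<open>P\<close> exceeds each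
  barrier momentum of (H5) at some time and cannot fall below it afterwards.\<close>

section \<open>Real functions near the end of an interval\<close>

lemma norm_diff_le_of_vector_derivative_bound:
  fixes f f' :: "real \<Rightarrow> 'a::real_normed_vector"
  assumes "a \<le> b" and "continuous_on {a..b} f"
    and "\<And>t. a < t \<Longrightarrow> t < b \<Longrightarrow> (f has_vector_derivative f' t) (at t) \<and> norm (f' t) \<le> V"
  shows "norm (f b - f a) \<le> V * (b - a)"
proof (cases "a = b")
  case False
  have "norm (f b - f a) \<le> V * b - V * a"
    by (rule differentiable_bound_general[where \<phi> = "\<lambda>t. V * t" and \<phi>' = "\<lambda>_. V"])
       (use assms False in \<open>auto intro!: continuous_intros derivative_eq_intros\<close>)
  then show ?thesis by (simp add: algebra_simps)
qed simp

lemma tendsto_at_left_of_bounded_derivative: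
  fixes f f' :: "real \<Rightarrow> 'a::banach"
  assumes "a < T"
    and f': "\<And>t. a < t \<Longrightarrow> t < T \<Longrightarrow> (f has_vector_derivative f' t) (at t) \<and> norm (f' t) \<le> V"
  obtains l where "(f \<longlongrightarrow> l) (at_left T)"
proof -
  have "norm (f' ((a + T) / 2)) \<le> V" using f' assms(1) by simp
  then have V: "0 \<le> V" using norm_ge_zero order_trans by blast
  have le: "dist (f u) (f v) \<le> V * dist u v" if "u \<in> {a<..<T}" "v \<in> {a<..<T}" "u \<le> v" for u v
  proof -
    have "continuous_on {u..v} f"
    proof (intro continuous_at_imp_continuous_on ballI)
      fix t assume "t \<in> {u..v}"
      then show "isCont f t" using that f'[of t] has_vector_derivative_continuous by auto
    qed
    then have "norm (f v - f u) \<le> V * (v - u)"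
      by (rule norm_diff_le_of_vector_derivative_bound[where f' = f', OF \<open>u \<le> v\<close>]) (use that f' in auto)
    then show ?thesis using that by (simp add: dist_norm norm_minus_commute)
  qed
  have "V-lipschitz_on {a<..<T} f"
    unfolding lipschitz_on_def
  proof (intro conjI V ballI)
    fix u v assume "u \<in> {a<..<T}" "v \<in> {a<..<T}"
    then show "dist (f u) (f v) \<le> V * dist u v"
      using le[of u v] le[of v u] by (cases "u \<le> v") (auto simp: dist_commute)
  qed
  then have "uniformly_continuous_on {a<..<T} f" by (rule lipschitz_on_uniformly_continuous)
  moreover have "T \<in> closure {a<..<T}" using assms(1) by simp
  ultimately obtain l where "(f \<longlongrightarrow> l) (at T within {a<..<T})"
    by (rule uniformly_continuous_on_extension_at_closure)
  moreover have "at T within {a<..<T} = at_left T"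
    by (rule at_within_nhd[of _ "{a<..}"]) (use assms(1) in auto)
  ultimately show ?thesis using that by simp
qed

lemma first_hitting_time:
  fixes \<phi> :: "real \<Rightarrow> real"
  assumes "a \<le> b" and cont: "continuous_on {a..b} \<phi>" and "\<phi> a < r" "r \<le> \<phi> b"
  obtains \<tau> where "a < \<tau>" "\<tau> \<le> b" "r \<le> \<phi> \<tau>" "\<And>t. a \<le> t \<Longrightarrow> t < \<tau> \<Longrightarrow> \<phi> t < r"
proof -
  define S where "S = {t \<in> {a..b}. r \<le> \<phi> t}"
  have "closed S" unfolding S_def
    by (intro continuous_on_closed_Collect_le continuous_on_const cont closed_atLeastAtMost)
  moreover have "b \<in> S" using assms by (simp add: S_def)
  moreover have "bdd_below S" by (auto simp: S_def bdd_below_def)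
  ultimately have "Inf S \<in> S" by (intro closed_contains_Inf) auto
  then have \<tau>: "a \<le> Inf S" "Inf S \<le> b" "r \<le> \<phi> (Inf S)" by (auto simp: S_def)
  show ?thesis
  proof (rule that[OF _ \<tau>(2,3)])
    show "a < Inf S" using \<tau> \<open>\<phi> a < r\<close> by (cases "a = Inf S") auto
    fix t assume t: "a \<le> t" "t < Inf S"
    show "\<phi> t < r"
    proof (rule ccontr)
      assume "\<not> \<phi> t < r"
      then have "t \<in> S" using t \<tau> by (auto simp: S_def)
      then have "Inf S \<le> t" using \<open>bdd_below S\<close> by (rule cInf_lower)
      then show False using t by simp
    qed
  qed
qed

lemma crossing_time_lower_bound:
  fixes z z' :: "real \<Rightarrow> 'a::real_normed_vector"
  assumes "0 < r" "a \<le> b" and cont: "continuous_on {a..b} z" and far: "r \<le> norm (z b - z a)"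
    and z': "\<And>t. a < t \<Longrightarrow> t < b \<Longrightarrow> norm (z t - z a) < r \<Longrightarrow>
               (z has_vector_derivative z' t) (at t) \<and> norm (z' t) \<le> V"
  shows "r \<le> V * (b - a)"
proof -
  obtain \<tau> where \<tau>: "a < \<tau>" "\<tau> \<le> b" "r \<le> norm (z \<tau> - z a)"
    and inside: "\<And>t. a \<le> t \<Longrightarrow> t < \<tau> \<Longrightarrow> norm (z t - z a) < r"
    by (rule first_hitting_time[where \<phi> = "\<lambda>t. norm (z t - z a)", OF \<open>a \<le> b\<close> _ _ far])
       (use \<open>0 < r\<close> in \<open>auto intro!: continuous_intros cont\<close>)
  have "norm (z' ((a + \<tau>) / 2)) \<le> V"
    using z'[of "(a + \<tau>) / 2"] inside[of "(a + \<tau>) / 2"] \<tau> by simp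
  then have V: "0 \<le> V" using norm_ge_zero order_trans by blast
  have "r \<le> norm (z \<tau> - z a)" by (fact \<tau>(3))
  also have "\<dots> \<le> V * (\<tau> - a)"
    by (rule norm_diff_le_of_vector_derivative_bound[where f' = z'])
       (use \<tau> z' inside in \<open>auto intro: continuous_on_subset[OF cont]\<close>)
  also have "\<dots> \<le> V * (b - a)" using \<tau> V by (intro mult_left_mono) auto
  finally show ?thesis .
qed

lemma filterlim_at_top_or_at_bot_at_left:
  fixes F :: "real \<Rightarrow> real"
  assumes "a < T" and cont: "continuous_on {a<..<T} F" and unbounded: "\<And>A. \<forall>\<^sub>F s in at_left T. A < \<bar>F s\<bar>"
  shows "filterlim F at_top (at_left T) \<or> filterlim F at_bot (at_left T)"
proof -
  obtain c where c: "c < T" "\<And>s. c < s \<Longrightarrow> s < T \<Longrightarrow> 1 < \<bar>F s\<bar>"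
    using unbounded[of 1] by (auto simp: eventually_at_left_field)
  define I where "I = {max a c<..<T}"
  have conn: "connected (F ` I)"
    unfolding I_def by (intro connected_continuous_image continuous_on_subset[OF cont]) auto
  have nonzero: "F s \<noteq> 0" if "s \<in> I" for s using c(2)[of s] that by (auto simp: I_def)
  have no_change: "\<not> (F s1 < 0 \<and> 0 < F s2)" if "s1 \<in> I" "s2 \<in> I" for s1 s2
  proof
    assume "F s1 < 0 \<and> 0 < F s2"
    then have "0 \<in> F ` I" using connectedD_interval[OF conn, of "F s1" "F s2" 0] that by auto
    then show False using nonzero by auto
  qed
  define m where "m = (max a c + T) / 2"
  have "m \<in> I" using assms(1) c(1) by (auto simp: I_def m_def)
  then consider "\<And>s. s \<in> I \<Longrightarrow> 0 < F s" | "\<And>s. s \<in> I \<Longrightarrow> F s < 0"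
    using no_change nonzero by (metis linorder_neqE_linordered_idom)
  moreover have evI: "\<forall>\<^sub>F s in at_left T. s \<in> I"
    unfolding I_def eventually_at_left_field using assms(1) c(1) by (intro exI[of _ "max a c"]) auto
  ultimately show ?thesis
  proof cases
    case 1
    have "\<forall>\<^sub>F s in at_left T. Z \<le> F s" for Z
      using unbounded[of "\<bar>Z\<bar>"] evI by eventually_elim (use 1 in force)
    then show ?thesis by (simp add: filterlim_at_top)
  next
    case 2
    have "\<forall>\<^sub>F s in at_left T. F s \<le> Z" for Z
      using unbounded[of "\<bar>Z\<bar>"] evI by eventually_elim (use 2 in force)
    then show ?thesis by (simp add: filterlim_at_bot)
  qed
qed

lemma eq_tendsto_of_deriv_nonneg:
  fixes f f' :: "real \<Rightarrow> real"
  assumes f': "\<And>s. a < s \<Longrightarrow> s < T \<Longrightarrow> (f has_real_derivative f' s) (at s) \<and> 0 \<le> f' s"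
    and lim: "(f \<longlongrightarrow> l) (at_left T)" and lower: "\<And>s. a < s \<Longrightarrow> s < T \<Longrightarrow> l \<le> f s"
    and s: "a < s" "s < T"
  shows "f s = l"
proof -
  have "f s \<le> f u" if "s \<le> u" "u < T" for u
  proof (rule DERIV_nonneg_imp_nondecreasing[OF that(1)])
    fix t assume "s \<le> t" "t \<le> u"
    then show "\<exists>y. (f has_real_derivative y) (at t) \<and> 0 \<le> y" using f'[of t] s that by auto
  qed
  then have "\<forall>\<^sub>F u in at_left T. f s \<le> f u"
    unfolding eventually_at_left_field using s by (auto intro!: exI[of _ s])
  then have "f s \<le> l" using tendsto_lowerbound[OF lim] by simp
  then show ?thesis using lower[OF s] by simp
qed

lemma exists_pos_deriv_of_filterlim_at_top:
  fixes f f' :: "real \<Rightarrow> real"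
  assumes "a < T" and f': "\<And>s. a < s \<Longrightarrow> s < T \<Longrightarrow> (f has_real_derivative f' s) (at s)"
    and top: "filterlim f at_top (at_left T)"
  shows "\<exists>s\<in>{a<..<T}. 0 < f' s"
proof (rule ccontr)
  assume nonpos: "\<not> ?thesis"
  define m where "m = (a + T) / 2"
  have m: "a < m" "m < T" using assms(1) by (auto simp: m_def)
  have "f u \<le> f m" if "m \<le> u" "u < T" for u
  proof (rule DERIV_nonpos_imp_nonincreasing[OF that(1)])
    fix t assume "m \<le> t" "t \<le> u"
    then have "a < t" "t < T" using m that by auto
    then show "\<exists>y. (f has_real_derivative y) (at t) \<and> y \<le> 0" using f'[of t] nonpos by (auto simp: not_less)
  qed
  then have "\<forall>\<^sub>F u in at_left T. f u \<le> f m"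
    unfolding eventually_at_left_field using m by (auto intro!: exI[of _ m])
  moreover have "\<forall>\<^sub>F u in at_left T. f m + 1 \<le> f u" using top by (simp add: filterlim_at_top)
  ultimately have "\<forall>\<^sub>F u in at_left T. False" by eventually_elim simp
  then show False by simp
qed

text \<open>Comparison of a solution of \<open>u' = G s u\<close> with a constant subsolution \<open>q\<close>: after the last
  time \<open>s\<^sub>1\<close> at which \<open>u \<ge> q\<close>, the one-sided Lipschitz bound makes \<open>(q - u s) * exp (- L * s)\<close>
  nonincreasing, so it cannot become positive.\<close>
lemma constant_lower_barrier:
  fixes u :: "real \<Rightarrow> real" and G :: "real \<Rightarrow> real \<Rightarrow> real"
  assumes "a < b" and cont: "continuous_on {a..b} u"
    and u': "\<And>s. a < s \<Longrightarrow> s < b \<Longrightarrow> (u has_real_derivative G s (u s)) (at s)"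
    and sub: "\<And>s. a < s \<Longrightarrow> s < b \<Longrightarrow> 0 \<le> G s q"
    and lip: "\<And>s. a < s \<Longrightarrow> s < b \<Longrightarrow> u s < q \<Longrightarrow> G s q - G s (u s) \<le> L * (q - u s)"
    and start: "q \<le> u a"
  shows "q \<le> u b"
proof (rule ccontr)
  assume "\<not> q \<le> u b"
  have reversed: "continuous_on {a..b} (\<lambda>t. u (a + b - t) - q)"
    by (intro continuous_intros continuous_on_compose2[OF cont]) auto
  obtain \<tau> where \<tau>: "a < \<tau>" "\<tau> \<le> b" "0 \<le> u (a + b - \<tau>) - q"
    and after: "\<And>t. a \<le> t \<Longrightarrow> t < \<tau> \<Longrightarrow> u (a + b - t) - q < 0"
    by (rule first_hitting_time[where \<phi> = "\<lambda>t. u (a + b - t) - q" and r = 0, OF _ reversed])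
       (use \<open>a < b\<close> \<open>\<not> q \<le> u b\<close> start in auto)
  define s1 where "s1 = a + b - \<tau>"
  have s1: "a \<le> s1" "s1 < b" "q \<le> u s1" using \<tau> by (auto simp: s1_def)
  have below: "u s < q" if "s1 < s" "s \<le> b" for s using after[of "a + b - s"] that by (simp add: s1_def)
  define v where "v s = (q - u s) * exp (- L * s)" for s
  have v': "(v has_real_derivative (- G s (u s) - L * (q - u s)) * exp (- L * s)) (at s)"
    if "a < s" "s < b" for s
    unfolding v_def using u'[OF that] by (auto intro!: derivative_eq_intros simp: algebra_simps)
  have "continuous_on {s1..b} v"
    unfolding v_def using s1 by (intro continuous_intros continuous_on_subset[OF cont]) auto
  moreover have "v differentiable (at s)" if "s1 < s" "s < b" for s
    using v'[of s] that s1 real_differentiable_def by auto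
  ultimately obtain l z where z: "s1 < z" "z < b" "(v has_real_derivative l) (at z)" "v b - v s1 = (b - s1) * l"
    using MVT[OF \<open>s1 < b\<close>] by blast
  have za: "a < z" using z s1 by simp
  have "l = (- G z (u z) - L * (q - u z)) * exp (- L * z)"
    using DERIV_unique[OF z(3) v'[OF za z(2)]] .
  moreover have "- G z (u z) - L * (q - u z) \<le> 0"
    using sub[OF za z(2)] lip[OF za z(2) below] z by linarith
  ultimately have "(b - s1) * l \<le> 0" using \<open>s1 < b\<close> by (intro mult_nonneg_nonpos) (auto simp: mult_nonpos_nonneg)
  then have "v b \<le> v s1" using z(4) by simp
  moreover have "v s1 \<le> 0" using s1 by (simp add: v_def mult_nonpos_nonneg)
  moreover have "0 < v b" using \<open>\<not> q \<le> u b\<close> by (simp add: v_def)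
  ultimately show False by simp
qed

lemma constant_upper_barrier:
  fixes u :: "real \<Rightarrow> real" and G :: "real \<Rightarrow> real \<Rightarrow> real"
  assumes "a < b" and cont: "continuous_on {a..b} u"
    and u': "\<And>s. a < s \<Longrightarrow> s < b \<Longrightarrow> (u has_real_derivative G s (u s)) (at s)"
    and super: "\<And>s. a < s \<Longrightarrow> s < b \<Longrightarrow> G s q \<le> 0"
    and lip: "\<And>s. a < s \<Longrightarrow> s < b \<Longrightarrow> q < u s \<Longrightarrow> G s (u s) - G s q \<le> L * (u s - q)"
    and start: "u a \<le> q"
  shows "u b \<le> q"
proof -
  have "- q \<le> - u b"
  proof (rule constant_lower_barrier[where u = "\<lambda>s. - u s" and G = "\<lambda>s r. - G s (- r)" and L = L, OF \<open>a < b\<close>])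
    show "continuous_on {a..b} (\<lambda>s. - u s)" using cont by (intro continuous_intros)
    fix s assume s: "a < s" "s < b"
    show "((\<lambda>s. - u s) has_real_derivative - G s (- (- u s))) (at s)"
      using DERIV_minus[OF u'[OF s]] by simp
    show "0 \<le> - G s (- (- q))" using super[OF s] by simp
    assume "- u s < - q"
    then show "- G s (- (- q)) - - G s (- (- u s)) \<le> L * (- q - - u s)" using lip[OF s] by simp
  qed (use start in simp)
  then show ?thesis by simp
qed

section \<open>Autonomous ordinary differential equations\<close>

lemma has_vector_derivative_fun_upd_at_left:
  fixes f f' :: "real \<Rightarrow> 'a::real_normed_vector"
  assumes "a < T" and f': "\<And>t. a < t \<Longrightarrow> t < T \<Longrightarrow> (f has_vector_derivative f' t) (at t)"
    and lim: "(f \<longlongrightarrow> L) (at_left T)" and lim': "(f' \<longlongrightarrow> D) (at_left T)"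
  shows "(f(T := L) has_vector_derivative D) (at T within {a..T})"
  unfolding has_vector_derivative_def has_derivative_within_alt
proof (intro conjI allI impI bounded_linear_scaleR_left)
  fix e :: real assume "0 < e"
  then obtain c where c: "c < T" "\<And>t. c < t \<Longrightarrow> t < T \<Longrightarrow> norm (f' t - D) < e"
    using tendstoD[OF lim'] by (auto simp: eventually_at_left_field dist_norm)
  show "\<exists>d>0. \<forall>y\<in>{a..T}. norm (y - T) < d \<longrightarrow>
          norm ((f(T := L)) y - (f(T := L)) T - (y - T) *\<^sub>R D) \<le> e * norm (y - T)"
  proof (intro exI[of _ "T - max a c"] conjI ballI impI)
    show "0 < T - max a c" using c assms(1) by simp
    fix y assume y: "y \<in> {a..T}" "norm (y - T) < T - max a c"
    show "norm ((f(T := L)) y - (f(T := L)) T - (y - T) *\<^sub>R D) \<le> e * norm (y - T)"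
    proof (cases "y = T")
      case False
      then have y': "max a c < y" "y < T" using y by auto
      have "norm ((f u - u *\<^sub>R D) - (f y - y *\<^sub>R D)) \<le> e * (u - y)" if "y \<le> u" "u < T" for u
      proof (rule norm_diff_le_of_vector_derivative_bound[where f' = "\<lambda>t. f' t - D", OF \<open>y \<le> u\<close>])
        have "continuous_on {y..u} f"
          by (intro continuous_at_imp_continuous_on ballI has_vector_derivative_continuous[OF f'])
             (use that y' in auto)
        then show "continuous_on {y..u} (\<lambda>t. f t - t *\<^sub>R D)" by (intro continuous_intros)
        fix t assume "y < t" "t < u"
        then show "((\<lambda>t. f t - t *\<^sub>R D) has_vector_derivative f' t - D) (at t) \<and> norm (f' t - D) \<le> e"
          using that y' c f'[of t] by (auto intro!: derivative_eq_intros less_imp_le)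
      qed
      then have "\<forall>\<^sub>F u in at_left T. norm ((f u - u *\<^sub>R D) - (f y - y *\<^sub>R D)) \<le> e * (u - y)"
        unfolding eventually_at_left_field using y' by (auto intro!: exI[of _ y])
      moreover have "((\<lambda>u. norm ((f u - u *\<^sub>R D) - (f y - y *\<^sub>R D))) \<longlongrightarrow> norm ((L - T *\<^sub>R D) - (f y - y *\<^sub>R D))) (at_left T)"
        by (intro tendsto_intros lim)
      moreover have "((\<lambda>u. e * (u - y)) \<longlongrightarrow> e * (T - y)) (at_left T)" by (intro tendsto_intros)
      ultimately have "norm ((L - T *\<^sub>R D) - (f y - y *\<^sub>R D)) \<le> e * (T - y)"
        using tendsto_le[OF trivial_limit_at_left_real] by blast
      then show ?thesis using False y' by (simp add: algebra_simps norm_minus_commute)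
    qed simp
  qed
qed

lemma ode_solution_fun_upd_endpoint:
  fixes A :: "real \<Rightarrow> 'a::real_normed_vector" and F :: "'a \<Rightarrow> 'a"
  assumes "0 < T"
    and A: "\<And>s. s \<in> {0..<T} \<Longrightarrow> (A has_vector_derivative F (A s)) (at s within {0..<T})"
    and lim: "(A \<longlongrightarrow> L) (at_left T)" and limF: "((\<lambda>s. F (A s)) \<longlongrightarrow> F L) (at_left T)"
    and t: "t \<in> {0..T}"
  shows "(A(T := L) has_vector_derivative F ((A(T := L)) t)) (at t within {0..T})"
proof (cases "t < T")
  case True
  have "at t within {0..T} = at t within {0..<T}"
    by (rule at_within_nhd[of _ "{..<T}"]) (use True in auto)
  then have "(A has_vector_derivative F ((A(T := L)) t)) (at t within {0..T})"
    using A[of t] t True by simp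
  then show ?thesis
    by (rule has_vector_derivative_transform_within[where d = "T - t"]) (use True t in \<open>auto simp: dist_real_def\<close>)
next
  case False
  then have "t = T" using t by simp
  have "(A has_vector_derivative F (A s)) (at s)" if "0 < s" "s < T" for s
    using A[of s] at_within_interior[of s "{0..<T}"] that by simp
  then show ?thesis
    using has_vector_derivative_fun_upd_at_left[OF assms(1) _ lim limF] \<open>t = T\<close> by simp
qed

lemma ode_solution_concat:
  fixes A B :: "real \<Rightarrow> 'a::real_normed_vector" and F :: "'a \<Rightarrow> 'a"
  assumes "0 < T" "0 < \<delta>"
    and A: "\<And>s. s \<in> {0..<T} \<Longrightarrow> (A has_vector_derivative F (A s)) (at s within {0..<T})"
    and B: "\<And>t. t \<in> {0..\<delta>} \<Longrightarrow> (B has_vector_derivative F (B t)) (at t within {0..\<delta>})"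
    and lim: "(A \<longlongrightarrow> B 0) (at_left T)" and limF: "((\<lambda>s. F (A s)) \<longlongrightarrow> F (B 0)) (at_left T)"
    and s: "s \<in> {0..<T+\<delta>}"
  shows "((\<lambda>u. if u \<in> {0..<T} then A u else B (u - T)) has_vector_derivative
           F (if s \<in> {0..<T} then A s else B (s - T))) (at s within {0..<T+\<delta>})"
proof -
  define f where "f = A(T := B 0)"
  have fT: "f T = B 0" by (simp add: f_def)
  have closures: "closure {0..<T} \<inter> closure {T..<T+\<delta>} = {T}" using assms(1,2) by auto
  have "{0..<T} \<union> {T} = {0..T}" using assms(1) by auto
  then have f': "(f has_vector_derivative F (f t)) (at t within {0..<T} \<union> {T})"
    if "t \<in> {0..<T} \<union> {T}" for t
    unfolding f_def using ode_solution_fun_upd_endpoint[OF assms(1) A lim limF] that by simp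
  have g': "((\<lambda>u. B (u - T)) has_vector_derivative F (B (t - T))) (at t within {T..<T+\<delta>} \<union> {T})"
    if "t \<in> {T..<T+\<delta>} \<union> {T}" for t
  proof -
    have img: "(\<lambda>u. u - T) ` ({T..<T+\<delta>} \<union> {T}) \<subseteq> {0..\<delta>}" using assms(2) by auto
    have "((\<lambda>u. u - T) has_vector_derivative 1) (at t within {T..<T+\<delta>} \<union> {T})"
      by (auto intro!: derivative_eq_intros)
    moreover have "(B has_vector_derivative F (B (t - T))) (at (t - T) within (\<lambda>u. u - T) ` ({T..<T+\<delta>} \<union> {T}))"
      by (rule has_vector_derivative_within_subset[OF B img]) (use that assms(2) in auto)
    ultimately show ?thesis using vector_diff_chain_within by (fastforce simp: o_def)
  qed
  have "((\<lambda>u. if u \<in> {0..<T} then f u else B (u - T)) has_vector_derivative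
           (if s \<in> {0..<T} then F (f s) else F (B (s - T)))) (at s within {0..<T+\<delta>})"
    by (rule has_vector_derivative_If_within_closures[where T = "{T..<T+\<delta>}"])
       (use s assms(1,2) f' g' in \<open>auto simp: closures fT\<close>)
  moreover have "(\<lambda>u. if u \<in> {0..<T} then f u else B (u - T)) = (\<lambda>u. if u \<in> {0..<T} then A u else B (u - T))"
    by (auto simp: f_def)
  moreover have "(if s \<in> {0..<T} then F (f s) else F (B (s - T))) = F (if s \<in> {0..<T} then A s else B (s - T))"
    by (simp add: f_def)
  ultimately show ?thesis by (simp only:)
qed

text \<open>Time is clamped to \<open>[0, \<delta>]\<close>, so that the Picard operator maps bounded continuous
  functions on the whole real line to such functions.\<close>
definition picard_map :: "('a::banach \<Rightarrow> 'a) \<Rightarrow> real \<Rightarrow> 'a \<Rightarrow> (real \<Rightarrow>\<^sub>C 'a) \<Rightarrow> real \<Rightarrow> 'a" where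
  "picard_map G \<delta> z0 g t = z0 + integral {0..min \<delta> (max 0 t)} (\<lambda>s. G (g s))"

lemma picard_map_bcontfun:
  fixes G :: "'a::banach \<Rightarrow> 'a"
  assumes cont: "continuous_on UNIV G" and bnd: "\<And>u. norm (G u) \<le> B" and "0 \<le> \<delta>"
  shows "picard_map G \<delta> z0 g \<in> bcontfun"
proof (rule bcontfun_normI)
  have Gg: "continuous_on A (\<lambda>s. G (g s))" for A
    by (rule continuous_on_compose2[OF cont]) auto
  have "continuous_on {0..\<delta>} (\<lambda>t. integral {0..t} (\<lambda>s. G (g s)))"
    by (intro indefinite_integral_continuous_1 integrable_continuous_real Gg)
  then have "continuous_on UNIV (\<lambda>t. integral {0..min \<delta> (max 0 t)} (\<lambda>s. G (g s)))"
    by (rule continuous_on_compose2) (use \<open>0 \<le> \<delta>\<close> in \<open>auto intro!: continuous_intros\<close>)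
  then show "continuous_on UNIV (picard_map G \<delta> z0 g)"
    unfolding picard_map_def by (intro continuous_intros)
  fix t
  have "norm (integral {0..min \<delta> (max 0 t)} (\<lambda>s. G (g s))) \<le> B * (min \<delta> (max 0 t) - 0)"
    by (rule integral_bound) (use Gg bnd \<open>0 \<le> \<delta>\<close> in auto)
  also have "\<dots> \<le> \<bar>B\<bar> * \<delta>" using \<open>0 \<le> \<delta>\<close> by (auto intro: mult_mono)
  finally show "norm (picard_map G \<delta> z0 g t) \<le> norm z0 + \<bar>B\<bar> * \<delta>"
    unfolding picard_map_def by (meson add_left_mono norm_triangle_ineq order_trans)
qed

lemma dist_picard_map_le:
  fixes G :: "'a::banach \<Rightarrow> 'a"
  assumes cont: "continuous_on UNIV G" and lip: "\<And>u v. norm (G u - G v) \<le> L * norm (u - v)"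
    and "0 \<le> L" "0 \<le> \<delta>"
  shows "norm (picard_map G \<delta> z0 g t - picard_map G \<delta> z0 h t) \<le> \<delta> * L * dist g h"
proof -
  define c where "c = min \<delta> (max 0 t)"
  have c: "0 \<le> c" "c \<le> \<delta>" using \<open>0 \<le> \<delta>\<close> by (auto simp: c_def)
  have Gg: "continuous_on A (\<lambda>s. G (k s))" for A and k :: "real \<Rightarrow>\<^sub>C 'a"
    by (rule continuous_on_compose2[OF cont]) auto
  have "picard_map G \<delta> z0 g t - picard_map G \<delta> z0 h t = integral {0..c} (\<lambda>s. G (g s) - G (h s))"
    unfolding picard_map_def c_def[symmetric]
    by (subst integral_diff) (auto intro!: integrable_continuous_real Gg)
  also have "norm \<dots> \<le> (L * dist g h) * (c - 0)"
  proof (rule integral_bound)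
    fix s
    have "norm (G (g s) - G (h s)) \<le> L * norm (g s - h s)" by (rule lip)
    also have "\<dots> \<le> L * dist g h"
      using dist_bounded[of g s h] \<open>0 \<le> L\<close> by (simp add: dist_norm mult_left_mono)
    finally show "norm (G (g s) - G (h s)) \<le> L * dist g h" .
  qed (use c Gg in \<open>auto intro!: continuous_intros\<close>)
  also have "\<dots> \<le> \<delta> * L * dist g h"
    using mult_right_mono[OF c(2) zero_le_dist[of g h]] mult_left_mono \<open>0 \<le> L\<close>
    by (fastforce simp: algebra_simps)
  finally show ?thesis .
qed

lemma lipschitz_ode_solution:
  fixes G :: "'a::banach \<Rightarrow> 'a"
  assumes cont: "continuous_on UNIV G" and lip: "\<And>u v. norm (G u - G v) \<le> L * norm (u - v)"
    and bnd: "\<And>u. norm (G u) \<le> B" and "0 \<le> L" "0 < \<delta>" "\<delta> * L < 1"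
  obtains z where "z 0 = z0"
    "\<And>t. t \<in> {0..\<delta>} \<Longrightarrow> (z has_vector_derivative G (z t)) (at t within {0..\<delta>}) \<and> norm (z t - z0) \<le> B * t"
proof -
  define \<Phi> where "\<Phi> g = Bcontfun (picard_map G \<delta> z0 g)" for g
  have app: "apply_bcontfun (\<Phi> g) = picard_map G \<delta> z0 g" for g
    unfolding \<Phi>_def using picard_map_bcontfun[OF cont bnd] \<open>0 < \<delta>\<close> by (simp add: Bcontfun_inverse)
  have "dist (\<Phi> g) (\<Phi> h) \<le> (\<delta> * L) * dist g h" for g h
    by (rule dist_bound) (use dist_picard_map_le[OF cont lip] \<open>0 \<le> L\<close> \<open>0 < \<delta>\<close> in \<open>simp add: app dist_norm\<close>)
  then obtain g where g: "\<Phi> g = g"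
    using banach_fix_type[of "\<delta> * L" \<Phi>] assms by auto
  have "g t = picard_map G \<delta> z0 g t" for t by (metis app g)
  then have g_eq: "g t = z0 + integral {0..t} (\<lambda>s. G (g s))" if "t \<in> {0..\<delta>}" for t
    using that unfolding picard_map_def by (metis atLeastAtMost_iff max.absorb2 min.absorb2)
  have Gg: "continuous_on {0..\<delta>} (\<lambda>s. G (g s))"
    by (rule continuous_on_compose2[OF cont]) auto
  show ?thesis
  proof (rule that)
    show "g 0 = z0" using g_eq[of 0] \<open>0 < \<delta>\<close> by simp
    fix t assume t: "t \<in> {0..\<delta>}"
    show "(g has_vector_derivative G (g t)) (at t within {0..\<delta>}) \<and> norm (g t - z0) \<le> B * t"
    proof
    have I: "((\<lambda>u. z0 + integral {0..u} (\<lambda>s. G (g s))) has_vector_derivative G (g t)) (at t within {0..\<delta>})"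
      using integral_has_vector_derivative[OF Gg t] by (auto intro!: derivative_eq_intros)
    show "(g has_vector_derivative G (g t)) (at t within {0..\<delta>})"
      by (rule has_vector_derivative_transform[OF t _ I]) (rule g_eq)
    have "norm (integral {0..t} (\<lambda>s. G (g s))) \<le> B * (t - 0)"
      by (rule integral_bound) (use t bnd continuous_on_subset[OF Gg, of "{0..t}"] in auto)
    then show "norm (g t - z0) \<le> B * t" using g_eq[OF t] by simp
    qed
  qed
qed

text \<open>The nearest-point retraction onto the ball preserves continuity, the Lipschitz constant
  and boundedness.\<close>
lemma lipschitz_extension_cball:
  fixes F :: "'a::euclidean_space \<Rightarrow> 'a"
  assumes "0 < r" and cont: "continuous_on (cball z0 r) F" and lip: "L-lipschitz_on (cball z0 r) F"
  obtains G B where "continuous_on UNIV G" "\<And>u v. norm (G u - G v) \<le> L * norm (u - v)"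
    "0 < B" "\<And>u. norm (G u) \<le> B" "\<And>w. w \<in> cball z0 r \<Longrightarrow> G w = F w"
proof -
  define S where "S = cball z0 r"
  have S: "convex S" "closed S" "S \<noteq> {}" using \<open>0 < r\<close> by (auto simp: S_def)
  have cp: "closest_point S w \<in> S" for w using closest_point_in_set[OF S(2,3)] .
  have L: "0 \<le> L" using lip by (simp add: lipschitz_on_def)
  have "bounded (F ` S)"
    unfolding S_def by (intro compact_imp_bounded compact_continuous_image cont compact_cball)
  then obtain B where B: "0 < B" "\<And>w. w \<in> S \<Longrightarrow> norm (F w) \<le> B"
    unfolding bounded_pos by auto
  show ?thesis
  proof (rule that[of "\<lambda>w. F (closest_point S w)" B])
    show "continuous_on UNIV (\<lambda>w. F (closest_point S w))"
      by (rule continuous_on_compose2[OF cont[folded S_def] continuous_on_closest_point[OF S]]) (use cp in auto)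
    fix u v
    have "norm (F (closest_point S u) - F (closest_point S v)) \<le> L * dist (closest_point S u) (closest_point S v)"
      using lip cp unfolding S_def lipschitz_on_def by (simp add: dist_norm)
    also have "\<dots> \<le> L * norm (u - v)"
      using closest_point_lipschitz[OF S] L by (simp add: dist_norm mult_left_mono)
    finally show "norm (F (closest_point S u) - F (closest_point S v)) \<le> L * norm (u - v)" .
  qed (use B cp in \<open>auto simp: closest_point_self S_def\<close>)
qed

lemma local_ode_solution:
  fixes F :: "'a::euclidean_space \<Rightarrow> 'a"
  assumes "0 < r" and cont: "continuous_on (cball z0 r) F" and lip: "L-lipschitz_on (cball z0 r) F"
  obtains \<delta> z where "0 < \<delta>" "z 0 = z0"
    "\<And>t. t \<in> {0..\<delta>} \<Longrightarrow> (z has_vector_derivative F (z t)) (at t within {0..\<delta>}) \<and> z t \<in> cball z0 r"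
proof -
  obtain G B where G: "continuous_on UNIV G" "\<And>u v. norm (G u - G v) \<le> L * norm (u - v)"
    "0 < B" "\<And>u. norm (G u) \<le> B" "\<And>w. w \<in> cball z0 r \<Longrightarrow> G w = F w"
    using lipschitz_extension_cball[OF assms] by blast
  have L: "0 \<le> L" using lip by (simp add: lipschitz_on_def)
  define \<delta> where "\<delta> = min (1 / (2 * L + 2)) (r / B)"
  have \<delta>: "0 < \<delta>" "\<delta> \<le> r / B" using L \<open>0 < r\<close> G(3) by (auto simp: \<delta>_def)
  have "\<delta> * L \<le> 1 / (2 * L + 2) * L" using L by (intro mult_right_mono) (auto simp: \<delta>_def)
  also have "\<dots> < 1" using L by (simp add: field_simps)
  finally obtain z where z: "z 0 = z0"
    "\<And>t. t \<in> {0..\<delta>} \<Longrightarrow> (z has_vector_derivative G (z t)) (at t within {0..\<delta>}) \<and> norm (z t - z0) \<le> B * t"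
    using lipschitz_ode_solution[OF G(1,2,4) L \<open>0 < \<delta>\<close>] by blast
  have z_ball: "z t \<in> cball z0 r" if "t \<in> {0..\<delta>}" for t
  proof -
    have "B * t \<le> B * (r / B)" using that \<delta> G(3) by (intro mult_left_mono) auto
    then show ?thesis using z(2)[OF that] G(3) by (simp add: dist_norm norm_minus_commute)
  qed
  show ?thesis
  proof (rule that)
    show "0 < \<delta>" "z 0 = z0" by (fact \<delta>(1), fact z(1))
    fix t assume t: "t \<in> {0..\<delta>}"
    then show "(z has_vector_derivative F (z t)) (at t within {0..\<delta>}) \<and> z t \<in> cball z0 r"
      using z(2)[OF t] z_ball[OF t] G(5) by simp
  qed
qed

section \<open>Hamiltonians satisfying condition (H)\<close>

lemma C1_on_has_derivative:
  assumes "C1_on U f" "z \<in> U"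
  shows "((\<lambda>w. f (fst w) (snd w)) has_derivative
          (\<lambda>h. pdx f (fst z) (snd z) * fst h + pdp f (fst z) (snd z) * snd h)) (at z)"
  using assms unfolding C1_on_def by blast

lemma C1_on_continuous:
  assumes "C1_on U f"
  shows "continuous_on U (\<lambda>w. f (fst w) (snd w))"
  using C1_on_has_derivative[OF assms] has_derivative_continuous
  by (blast intro: continuous_at_imp_continuous_on)

lemma C1_on_has_real_derivative_pdp:
  assumes "C1_on U f" "(x, q) \<in> U"
  shows "((\<lambda>q. f x q) has_real_derivative pdp f x q) (at q)"
proof -
  have "((\<lambda>q. (x, q)) has_derivative (\<lambda>h. (0, h))) (at q)"
    by (auto intro!: derivative_eq_intros)
  from has_derivative_compose[OF this C1_on_has_derivative[OF assms]]
  show ?thesis by (simp add: has_field_derivative_def mult_commute_abs)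
qed

lemma C1_on_lipschitz:
  assumes C: "C1_on U f" and S: "convex S" "compact S" "S \<subseteq> U"
  obtains N where "N-lipschitz_on S (\<lambda>w. f (fst w) (snd w))"
proof -
  have "continuous_on S (\<lambda>w. \<bar>pdx f (fst w) (snd w)\<bar> + \<bar>pdp f (fst w) (snd w)\<bar>)"
    using C S(3) unfolding C1_on_def by (auto intro!: continuous_intros intro: continuous_on_subset)
  then have "bounded ((\<lambda>w. \<bar>pdx f (fst w) (snd w)\<bar> + \<bar>pdp f (fst w) (snd w)\<bar>) ` S)"
    by (intro compact_imp_bounded compact_continuous_image S(2))
  then obtain N where N: "0 < N" "\<And>w. w \<in> S \<Longrightarrow> \<bar>pdx f (fst w) (snd w)\<bar> + \<bar>pdp f (fst w) (snd w)\<bar> \<le> N"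
    unfolding bounded_pos by fastforce
  show ?thesis
  proof (rule that, rule bounded_derivative_imp_lipschitz[OF _ S(1)])
    fix w assume w: "w \<in> S"
    show "((\<lambda>w. f (fst w) (snd w)) has_derivative
          (\<lambda>h. pdx f (fst w) (snd w) * fst h + pdp f (fst w) (snd w) * snd h)) (at w within S)"
      using C1_on_has_derivative[OF C] w S(3) has_derivative_at_withinI by blast
    show "onorm (\<lambda>h. pdx f (fst w) (snd w) * fst h + pdp f (fst w) (snd w) * snd h) \<le> N"
    proof (rule onorm_le)
      fix h :: "real \<times> real"
      have "\<bar>fst h\<bar> \<le> norm h" "\<bar>snd h\<bar> \<le> norm h"
        using norm_fst_le[of "fst h" "snd h"] norm_snd_le[of "snd h" "fst h"] by auto
      then have "norm (pdx f (fst w) (snd w) * fst h + pdp f (fst w) (snd w) * snd h)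
            \<le> \<bar>pdx f (fst w) (snd w)\<bar> * norm h + \<bar>pdp f (fst w) (snd w)\<bar> * norm h"
        by (auto simp: abs_mult intro!: order_trans[OF abs_triangle_ineq] add_mono mult_left_mono)
      also have "\<dots> \<le> N * norm h" using N(2)[OF w] by (simp add: distrib_right[symmetric] mult_right_mono)
      finally show "norm (pdx f (fst w) (snd w) * fst h + pdp f (fst w) (snd w) * snd h) \<le> N * norm h" .
    qed
  qed (use N in simp)
qed

definition ham_field :: "(real \<Rightarrow> real \<Rightarrow> real) \<Rightarrow> real \<times> real \<Rightarrow> real \<times> real" where
  "ham_field H z = (pdp H (fst z) (snd z), - pdx H (fst z) (snd z))"

lemma has_vector_derivative_pair_iff:
  "((\<lambda>s. (X s, P s)) has_vector_derivative (X', P')) (at t within S) \<longleftrightarrow>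
     (X has_real_derivative X') (at t within S) \<and> (P has_real_derivative P') (at t within S)"
proof
  assume d: "((\<lambda>s. (X s, P s)) has_vector_derivative (X', P')) (at t within S)"
  then have d': "((\<lambda>s. (X s, P s)) has_derivative (\<lambda>h. h *\<^sub>R (X', P'))) (at t within S)"
    by (simp add: has_vector_derivative_def)
  from has_derivative_fst[OF d'] has_derivative_snd[OF d']
  show "(X has_real_derivative X') (at t within S) \<and> (P has_real_derivative P') (at t within S)"
    by (simp add: has_field_derivative_def mult_commute_abs)
next
  assume "(X has_real_derivative X') (at t within S) \<and> (P has_real_derivative P') (at t within S)"
  then have "((\<lambda>s. (X s, P s)) has_derivative (\<lambda>h. (X' * h, P' * h))) (at t within S)"
    by (auto simp: has_field_derivative_def intro: has_derivative_Pair)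
  then show "((\<lambda>s. (X s, P s)) has_vector_derivative (X', P')) (at t within S)"
    by (simp add: has_vector_derivative_def mult.commute)
qed

lemma ham_sol_iff:
  "ham_sol b H x p T X P \<longleftrightarrow> X 0 = x \<and> P 0 = p \<and>
     (\<forall>s\<in>{0..<T}. X s \<in> Kset b \<and>
        ((\<lambda>s. (X s, P s)) has_vector_derivative ham_field H (X s, P s)) (at s within {0..<T}))"
  by (simp add: ham_sol_def ham_field_def has_vector_derivative_pair_iff)

locale hamiltonian =
  fixes b :: bool and H :: "real \<Rightarrow> real \<Rightarrow> real" and U :: "(real \<times> real) set"
  assumes open_U: "open U" and K_U: "\<And>y q. y \<in> Kset b \<Longrightarrow> (y, q) \<in> U"
    and C2: "C2_on U H" and cond: "conditionH b H"
begin

lemma C1_H: "C1_on U H" and C1_pdx: "C1_on U (pdx H)" and C1_pdp: "C1_on U (pdp H)"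
  using C2 by (auto simp: C2_on_def)

lemma closed_K: "closed (Kset b)" and convex_K: "convex (Kset b)"
  by (auto simp: Kset_def)

lemma continuous_on_ham_field: "continuous_on U (ham_field H)"
  using C1_on_continuous[OF C1_pdp] C1_on_continuous[OF C1_pdx]
  unfolding ham_field_def by (intro continuous_intros) auto

lemma lipschitz_on_ham_field:
  assumes "convex S" "compact S" "S \<subseteq> U"
  obtains L where "L-lipschitz_on S (ham_field H)"
proof -
  obtain L1 L2 where "L1-lipschitz_on S (\<lambda>w. pdp H (fst w) (snd w))" "L2-lipschitz_on S (\<lambda>w. pdx H (fst w) (snd w))"
    using C1_on_lipschitz[OF C1_pdp assms] C1_on_lipschitz[OF C1_pdx assms] by metis
  from lipschitz_on_Pair[OF this(1) lipschitz_on_minus[OF this(2)]] show ?thesis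
    by (intro that) (simp add: ham_field_def[abs_def])
qed

lemma ham_field_bounded:
  obtains V where "0 < V" "\<And>y q. y \<in> Kset b \<Longrightarrow> \<bar>y\<bar> \<le> A \<Longrightarrow> \<bar>q\<bar> \<le> M \<Longrightarrow> norm (ham_field H (y, q)) \<le> V"
proof -
  define C where "C = ({-A..A} \<inter> Kset b) \<times> {-M..M}"
  have "compact C" unfolding C_def by (intro compact_Times compact_Int_closed closed_K) auto
  moreover have "C \<subseteq> U" using K_U by (auto simp: C_def)
  ultimately have "bounded (ham_field H ` C)"
    by (intro compact_imp_bounded compact_continuous_image continuous_on_subset[OF continuous_on_ham_field])
  then obtain V where "0 < V" "\<And>z. z \<in> C \<Longrightarrow> norm (ham_field H z) \<le> V"
    unfolding bounded_pos by fastforce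
  then show ?thesis by (intro that[of V]) (auto simp: C_def abs_le_iff)
qed

lemma local_hamiltonian_solution:
  assumes "0 < \<rho>" "cball y0 \<rho> \<subseteq> Kset b"
  obtains \<delta> Z where "0 < \<delta>" "Z 0 = (y0, q0)"
    "\<And>t. t \<in> {0..\<delta>} \<Longrightarrow> (Z has_vector_derivative ham_field H (Z t)) (at t within {0..\<delta>}) \<and> fst (Z t) \<in> Kset b"
proof -
  have "(y0, q0) \<in> U" using K_U assms by (simp add: subset_iff)
  then obtain r where r: "0 < r" "cball (y0, q0) r \<subseteq> U" using open_U open_contains_cball by blast
  define r' where "r' = min r \<rho>"
  have r': "0 < r'" "cball (y0, q0) r' \<subseteq> U" using r assms(1) by (auto simp: r'_def)
  obtain L where "L-lipschitz_on (cball (y0, q0) r') (ham_field H)"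
    using lipschitz_on_ham_field[OF convex_cball compact_cball r'(2)] .
  moreover have "continuous_on (cball (y0, q0) r') (ham_field H)"
    using continuous_on_subset[OF continuous_on_ham_field r'(2)] .
  ultimately obtain \<delta> Z where Z: "0 < \<delta>" "Z 0 = (y0, q0)"
    "\<And>t. t \<in> {0..\<delta>} \<Longrightarrow> (Z has_vector_derivative ham_field H (Z t)) (at t within {0..\<delta>}) \<and> Z t \<in> cball (y0, q0) r'"
    using local_ode_solution[OF r'(1)] by metis
  have "fst (Z t) \<in> Kset b" if "t \<in> {0..\<delta>}" for t
  proof -
    have "dist y0 (fst (Z t)) \<le> \<rho>"
      using Z(3)[OF that] dist_fst_le[of "(y0, q0)" "Z t"] by (auto simp: r'_def)
    then show ?thesis using assms(2) by auto
  qed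
  then show ?thesis using Z that by blast
qed

lemma H_zero: "y \<in> Kset b \<Longrightarrow> H y 0 = 0"
  using cond by (simp add: conditionH_def condH0_def)

lemma H_has_real_derivative: "y \<in> Kset b \<Longrightarrow> ((\<lambda>q. H y q) has_real_derivative pdp H y q) (at q)"
  using C1_on_has_real_derivative_pdp[OF C1_H K_U] .

lemma pdp_strict_mono:
  assumes "y \<in> Kset b" "q1 < q2"
  shows "pdp H y q1 < pdp H y q2"
proof (rule DERIV_pos_imp_increasing[OF assms(2)])
  fix q
  have "pdp (pdp H) y q > 0" using cond assms(1) by (simp add: conditionH_def condH1_def)
  then show "\<exists>d. ((\<lambda>q. pdp H y q) has_real_derivative d) (at q) \<and> 0 < d"
    using C1_on_has_real_derivative_pdp[OF C1_pdp K_U[OF assms(1)]] by blast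
qed

lemma pdp_mono: "y \<in> Kset b \<Longrightarrow> q1 \<le> q2 \<Longrightarrow> pdp H y q1 \<le> pdp H y q2"
  using pdp_strict_mono[of y q1 q2] by (cases "q1 = q2") auto

lemma H_tangent_le:
  assumes y: "y \<in> Kset b"
  shows "H y r + pdp H y r * (q - r) \<le> H y q"
proof (cases q r rule: linorder_cases)
  case less
  then obtain z where z: "q < z" "z < r" "H y r - H y q = (r - q) * pdp H y z"
    using MVT2[of q r "H y" "pdp H y"] H_has_real_derivative[OF y] by blast
  have "(r - q) * pdp H y z \<le> (r - q) * pdp H y r"
    using pdp_mono[OF y, of z r] z less by (intro mult_left_mono) auto
  then show ?thesis using z(3) by (simp add: algebra_simps)
next
  case greater
  then obtain z where z: "r < z" "z < q" "H y q - H y r = (q - r) * pdp H y z"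
    using MVT2[of r q "H y" "pdp H y"] H_has_real_derivative[OF y] by blast
  have "(q - r) * pdp H y r \<le> (q - r) * pdp H y z"
    using pdp_mono[OF y, of r z] z greater by (intro mult_left_mono) auto
  then show ?thesis using z(3) by (simp add: algebra_simps)
qed simp

lemma H_gt_of_large_momentum:
  assumes "a \<le> c" and sub: "{a..c} \<subseteq> interior (Kset b)"
  obtains Q where "0 \<le> Q" "\<And>y r. y \<in> {a..c} \<Longrightarrow> Q \<le> \<bar>r\<bar> \<Longrightarrow> E < H y r"
proof -
  have "filterlim (\<lambda>r. (INF y\<in>{a..c}. H y r / \<bar>r\<bar>)) at_top at_infinity"
    using cond assms unfolding conditionH_def condH3_def by auto
  then have "\<forall>\<^sub>F r in at_infinity. \<bar>E\<bar> + 1 \<le> (INF y\<in>{a..c}. H y r / \<bar>r\<bar>)"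
    by (simp add: filterlim_at_top)
  then obtain Q where Q: "\<And>r. Q \<le> norm r \<Longrightarrow> \<bar>E\<bar> + 1 \<le> (INF y\<in>{a..c}. H y r / \<bar>r\<bar>)"
    by (auto simp: eventually_at_infinity)
  have aK: "{a..c} \<subseteq> Kset b" using sub interior_subset by blast
  show ?thesis
  proof (rule that[of "max Q 1"])
    fix y r assume y: "y \<in> {a..c}" and r: "max Q 1 \<le> \<bar>r\<bar>"
    have "continuous_on {a..c} (\<lambda>y. H (fst (y, r)) (snd (y, r)))"
      by (rule continuous_on_compose2[OF C1_on_continuous[OF C1_H]])
         (use aK K_U in \<open>auto intro!: continuous_intros\<close>)
    then have "bdd_below ((\<lambda>y. H y r / \<bar>r\<bar>) ` {a..c})"
      using r by (intro bounded_imp_bdd_below compact_imp_bounded compact_continuous_image continuous_intros) auto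
    then have "(INF y\<in>{a..c}. H y r / \<bar>r\<bar>) \<le> H y r / \<bar>r\<bar>" using y by (rule cINF_lower)
    then have "\<bar>E\<bar> + 1 \<le> H y r / \<bar>r\<bar>" using Q[of r] r by simp
    then have "(\<bar>E\<bar> + 1) * \<bar>r\<bar> \<le> H y r" using r by (simp add: pos_le_divide_eq)
    moreover have "(\<bar>E\<bar> + 1) * 1 \<le> (\<bar>E\<bar> + 1) * \<bar>r\<bar>" using r by (intro mult_left_mono) auto
    ultimately have "\<bar>E\<bar> + 1 \<le> H y r" by simp
    then show "E < H y r" using abs_ge_self[of E] by linarith
  qed simp
qed

text \<open>The minimiser of \<open>H y\<close> from condition (H4); as an \<open>ARG_MIN\<close> it is only meaningful where
  a minimiser exists, which is shown below for \<open>y\<close> in the interior of \<open>K\<close>.\<close>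
definition argmin_H :: "real \<Rightarrow> real" where
  "argmin_H y = (ARG_MIN (H y) q. True)"

lemma argmin_H_le:
  assumes y: "y \<in> interior (Kset b)"
  shows "H y (argmin_H y) \<le> H y q"
proof -
  have yK: "y \<in> Kset b" using y interior_subset by blast
  have "{y..y} \<subseteq> interior (Kset b)" using y by simp
  then obtain R where R: "0 \<le> R" "\<And>y' r. y' \<in> {y..y} \<Longrightarrow> R \<le> \<bar>r\<bar> \<Longrightarrow> 0 < H y' r"
    using H_gt_of_large_momentum[OF order_refl] by blast
  have "continuous_on {-R..R} (H y)"
    by (rule DERIV_continuous_on[where D = "pdp H y"])
       (rule has_field_derivative_at_within[OF H_has_real_derivative[OF yK]])
  moreover have "{-R..R} \<noteq> {}" using R(1) by simp
  ultimately obtain q0 where q0: "q0 \<in> {-R..R}" "\<And>q. q \<in> {-R..R} \<Longrightarrow> H y q0 \<le> H y q"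
    using continuous_attains_inf[OF compact_Icc] by meson
  have min: "H y q0 \<le> H y q" for q
  proof (cases "q \<in> {-R..R}")
    case False
    then have "0 < H y q" using R(2)[of y q] by auto
    moreover have "H y q0 \<le> H y 0" using q0 R(1) by simp
    ultimately show ?thesis using H_zero[OF yK] by simp
  qed (use q0 in simp)
  show ?thesis unfolding argmin_H_def
  proof (rule arg_minI[of "\<lambda>_. True" q0])
    show "\<And>z. \<not> H y z < H y q0" using min by (simp add: not_less)
    show "\<And>z. \<forall>w. True \<longrightarrow> \<not> H y w < H y z \<Longrightarrow> H y z \<le> H y q" by (simp add: not_less)
  qed simp
qed

lemma pdp_argmin_H: "y \<in> interior (Kset b) \<Longrightarrow> pdp H y (argmin_H y) = 0"
  by (rule DERIV_local_min[OF H_has_real_derivative, of _ 1])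
     (use argmin_H_le interior_subset in auto)

lemma pdp_pos_iff:
  assumes "y \<in> interior (Kset b)"
  shows "0 < pdp H y q \<longleftrightarrow> argmin_H y < q"
proof -
  have "y \<in> Kset b" using assms interior_subset by blast
  then show ?thesis
    using pdp_strict_mono[of y q "argmin_H y"] pdp_strict_mono[of y "argmin_H y" q] pdp_argmin_H[OF assms]
    by (cases q "argmin_H y" rule: linorder_cases) auto
qed

lemma pdp_neg_iff:
  assumes "y \<in> interior (Kset b)"
  shows "pdp H y q < 0 \<longleftrightarrow> q < argmin_H y"
proof -
  have "y \<in> Kset b" using assms interior_subset by blast
  then show ?thesis
    using pdp_strict_mono[of y q "argmin_H y"] pdp_strict_mono[of y "argmin_H y" q] pdp_argmin_H[OF assms]
    by (cases q "argmin_H y" rule: linorder_cases) auto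
qed

lemma argmin_H_lower: "filterlim argmin_H at_bot (lowerF b)"
  and argmin_H_upper: "filterlim argmin_H at_top (upperF b)"
  using cond unfolding conditionH_def condH4_def argmin_H_def[abs_def] by blast+

text \<open>The condition \<open>0 \<le> r1 * (r - r1)\<close> says that \<open>r\<close> lies on the ray from \<open>r1\<close> pointing
  away from \<open>0\<close>.\<close>
lemma H_gt_near_point:
  assumes y0: "y0 \<in> Kset b" and "r1 \<noteq> 0" and gt: "max E 0 < H y0 r1"
  obtains \<eta> where "0 < \<eta>" "\<And>y r. y \<in> Kset b \<Longrightarrow> \<bar>y - y0\<bar> < \<eta> \<Longrightarrow> 0 \<le> r1 * (r - r1) \<Longrightarrow> E < H y r"
proof -
  have "H y0 r1 - pdp H y0 r1 * r1 \<le> 0" using H_tangent_le[OF y0, of r1 0] H_zero[OF y0] by simp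
  then have pos: "0 < pdp H y0 r1 * r1" using gt by simp
  have lim: "((\<lambda>y. (y, r1)) \<longlongrightarrow> (y0, r1)) (at y0)" by (intro tendsto_intros)
  have "(y0, r1) \<in> U" using K_U[OF y0] .
  moreover from this have "\<forall>\<^sub>F y in at y0. (y, r1) \<in> U"
    using topological_tendstoD[OF lim open_U] by blast
  ultimately have "((\<lambda>y. H y r1) \<longlongrightarrow> H y0 r1) (at y0)" "((\<lambda>y. pdp H y r1) \<longlongrightarrow> pdp H y0 r1) (at y0)"
    using continuous_on_tendsto_compose[OF C1_on_continuous[OF C1_H] lim]
      continuous_on_tendsto_compose[OF C1_on_continuous[OF C1_pdp] lim] by auto
  then have "\<forall>\<^sub>F y in at y0. E < H y r1" "\<forall>\<^sub>F y in at y0. 0 < pdp H y r1 * r1"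
    using gt pos by (auto intro!: order_tendstoD tendsto_intros)
  from eventually_conj[OF this] obtain \<eta> where \<eta>: "0 < \<eta>"
    "\<And>y. y \<noteq> y0 \<Longrightarrow> dist y y0 < \<eta> \<Longrightarrow> E < H y r1 \<and> 0 < pdp H y r1 * r1"
    unfolding eventually_at by blast
  show ?thesis
  proof (rule that[OF \<eta>(1)])
    fix y r assume y: "y \<in> Kset b" "\<bar>y - y0\<bar> < \<eta>" and r: "0 \<le> r1 * (r - r1)"
    have near: "E < H y r1 \<and> 0 < pdp H y r1 * r1"
      using \<eta>(2)[of y] y gt pos by (cases "y = y0") (auto simp: dist_real_def)
    then have "0 \<le> (pdp H y r1 * r1) * (r1 * (r - r1))" using r by simp
    then have "0 \<le> (pdp H y r1 * (r - r1)) * r1\<^sup>2" by (simp add: power2_eq_square algebra_simps)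
    then have "0 \<le> pdp H y r1 * (r - r1)" using \<open>r1 \<noteq> 0\<close> by (simp add: zero_le_mult_iff)
    then show "E < H y r" using H_tangent_le[OF y(1), of r1 r] near by linarith
  qed
qed

lemma H_gt_near_lower_end:
  assumes b
  obtains \<eta> Q where "0 < \<eta>" "\<And>y r. y \<in> {-1..-1+\<eta>} \<Longrightarrow> Q \<le> r \<Longrightarrow> E < H y r"
proof -
  have "filterlim (\<lambda>p. H (-1) p / p) at_top at_top"
    using cond \<open>b\<close> unfolding conditionH_def condH3_def by blast
  then obtain N where N: "\<And>r. N \<le> r \<Longrightarrow> \<bar>E\<bar> + 1 \<le> H (-1) r / r"
    unfolding filterlim_at_top eventually_at_top_linorder by blast
  define r1 where "r1 = max N 1"
  have "(\<bar>E\<bar> + 1) * 1 \<le> (\<bar>E\<bar> + 1) * r1" by (intro mult_left_mono) (auto simp: r1_def)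
  also have "\<dots> \<le> H (-1) r1" using N[of r1] by (simp add: r1_def pos_le_divide_eq)
  finally have gt: "max E 0 < H (-1) r1" using abs_ge_self[of E] by (simp add: max_less_iff_conj)
  have r1ne: "r1 \<noteq> 0" by (simp add: r1_def)
  have K1: "-1 \<in> Kset b" using \<open>b\<close> by (simp add: Kset_def)
  obtain \<eta> where \<eta>: "0 < \<eta>"
    "\<And>y r. y \<in> Kset b \<Longrightarrow> \<bar>y - (-1)\<bar> < \<eta> \<Longrightarrow> 0 \<le> r1 * (r - r1) \<Longrightarrow> E < H y r"
    using H_gt_near_point[OF K1 r1ne gt] by blast
  show ?thesis
  proof (rule that[of "min (\<eta> / 2) 1" r1])
    fix y r assume "y \<in> {-1..-1 + min (\<eta> / 2) 1}" "r1 \<le> r"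
    then show "E < H y r" using \<eta> \<open>b\<close> by (intro \<eta>(2)) (auto simp: Kset_def r1_def)
  qed (use \<eta> in simp)
qed

lemma H_gt_near_upper_end:
  assumes b
  obtains \<eta> Q where "0 < \<eta>" "\<And>y r. y \<in> {1-\<eta>..1} \<Longrightarrow> r \<le> Q \<Longrightarrow> E < H y r"
proof -
  have "filterlim (\<lambda>p. H 1 p / (- p)) at_top at_bot"
    using cond \<open>b\<close> unfolding conditionH_def condH3_def by blast
  then obtain N where N: "\<And>r. r \<le> N \<Longrightarrow> \<bar>E\<bar> + 1 \<le> H 1 r / (- r)"
    unfolding filterlim_at_top eventually_at_bot_linorder by blast
  define r1 where "r1 = min N (-1)"
  have "(\<bar>E\<bar> + 1) * 1 \<le> (\<bar>E\<bar> + 1) * (- r1)" by (intro mult_left_mono) (auto simp: r1_def)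
  also have "\<dots> \<le> H 1 r1"
  proof -
    have "0 < - r1" "\<bar>E\<bar> + 1 \<le> H 1 r1 / (- r1)" using N[of r1] by (auto simp: r1_def)
    then show ?thesis by (simp only: pos_le_divide_eq)
  qed
  finally have gt: "max E 0 < H 1 r1" using abs_ge_self[of E] by (simp add: max_less_iff_conj)
  have r1ne: "r1 \<noteq> 0" by (simp add: r1_def)
  have K1: "1 \<in> Kset b" using \<open>b\<close> by (simp add: Kset_def)
  obtain \<eta> where \<eta>: "0 < \<eta>"
    "\<And>y r. y \<in> Kset b \<Longrightarrow> \<bar>y - 1\<bar> < \<eta> \<Longrightarrow> 0 \<le> r1 * (r - r1) \<Longrightarrow> E < H y r"
    using H_gt_near_point[OF K1 r1ne gt] by blast
  show ?thesis
  proof (rule that[of "min (\<eta> / 2) 1" r1])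
    fix y r assume "y \<in> {1 - min (\<eta> / 2) 1..1}" "r \<le> r1"
    then show "E < H y r" using \<eta> \<open>b\<close> by (intro \<eta>(2)) (auto simp: Kset_def r1_def mult_nonpos_nonpos)
  qed (use \<eta> in simp)
qed

lemma H_gt_off_upper_end:
  assumes b "0 < \<epsilon>"
  obtains Q where "\<And>y r. y \<in> {-1..1-\<epsilon>} \<Longrightarrow> Q \<le> r \<Longrightarrow> E < H y r"
proof -
  obtain \<eta> Q1 where \<eta>: "0 < \<eta>" and Q1: "\<And>y r. y \<in> {-1..-1+\<eta>} \<Longrightarrow> Q1 \<le> r \<Longrightarrow> E < H y r"
    using H_gt_near_lower_end[OF \<open>b\<close>] by blast
  define c d where "c = -1 + min \<eta> 1" and "d = 1 - min \<epsilon> 1"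
  have "c \<le> d" "{c..d} \<subseteq> interior (Kset b)"
    using \<eta> assms by (auto simp: c_def d_def Kset_def)
  then obtain Q2 where Q2: "0 \<le> Q2" "\<And>y r. y \<in> {c..d} \<Longrightarrow> Q2 \<le> \<bar>r\<bar> \<Longrightarrow> E < H y r"
    by (rule H_gt_of_large_momentum) blast
  show ?thesis
  proof (rule that[of "max Q1 Q2"])
    fix y r assume y: "y \<in> {-1..1-\<epsilon>}" and r: "max Q1 Q2 \<le> r"
    show "E < H y r"
    proof (cases "y \<le> c")
      case True
      then show ?thesis using Q1[of y r] y r by (auto simp: c_def)
    next
      case False
      then show ?thesis using Q2(2)[of y r] y r by (auto simp: d_def)
    qed
  qed
qed

lemma H_gt_off_lower_end:
  assumes b "0 < \<epsilon>"
  obtains Q where "\<And>y r. y \<in> {-1+\<epsilon>..1} \<Longrightarrow> r \<le> Q \<Longrightarrow> E < H y r"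
proof -
  obtain \<eta> Q1 where \<eta>: "0 < \<eta>" and Q1: "\<And>y r. y \<in> {1-\<eta>..1} \<Longrightarrow> r \<le> Q1 \<Longrightarrow> E < H y r"
    using H_gt_near_upper_end[OF \<open>b\<close>] by blast
  define c d where "c = -1 + min \<epsilon> 1" and "d = 1 - min \<eta> 1"
  have "c \<le> d" "{c..d} \<subseteq> interior (Kset b)"
    using \<eta> assms by (auto simp: c_def d_def Kset_def)
  then obtain Q2 where Q2: "0 \<le> Q2" "\<And>y r. y \<in> {c..d} \<Longrightarrow> Q2 \<le> \<bar>r\<bar> \<Longrightarrow> E < H y r"
    by (rule H_gt_of_large_momentum) blast
  show ?thesis
  proof (rule that[of "min Q1 (- Q2)"])
    fix y r assume y: "y \<in> {-1+\<epsilon>..1}" and r: "r \<le> min Q1 (- Q2)"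
    show "E < H y r"
    proof (cases "d \<le> y")
      case True
      then show ?thesis using Q1[of y r] y r by (auto simp: d_def)
    next
      case False
      then show ?thesis using Q2(2)[of y r] y r by (auto simp: c_def)
    qed
  qed
qed

end

section \<open>Maximal solutions of Hamilton's equations\<close>

locale maximal_solution = hamiltonian +
  fixes x p T :: real and X P :: "real \<Rightarrow> real"
  assumes maxsol: "ham_maxsol b H x p T X P" and T_pos: "0 < T"
begin

definition Z :: "real \<Rightarrow> real \<times> real" where
  "Z s = (X s, P s)"

lemma solution: "ham_sol b H x p T X P"
  using maxsol by (simp add: ham_maxsol_def)

lemma X_in_K: "s \<in> {0..<T} \<Longrightarrow> X s \<in> Kset b"
  using solution by (simp add: ham_sol_def)

lemma Z_in_U: "s \<in> {0..<T} \<Longrightarrow> Z s \<in> U"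
  using K_U X_in_K by (simp add: Z_def)

lemma Z_has_vector_derivative_within:
  "s \<in> {0..<T} \<Longrightarrow> (Z has_vector_derivative ham_field H (Z s)) (at s within {0..<T})"
  using solution unfolding ham_sol_iff Z_def[abs_def] by blast

lemma Z_has_vector_derivative:
  "0 < s \<Longrightarrow> s < T \<Longrightarrow> (Z has_vector_derivative ham_field H (Z s)) (at s)"
  using Z_has_vector_derivative_within[of s] at_within_interior[of s "{0..<T}"] by simp

lemma X_has_real_derivative: "0 < s \<Longrightarrow> s < T \<Longrightarrow> (X has_real_derivative pdp H (X s) (P s)) (at s)"
  and P_has_real_derivative: "0 < s \<Longrightarrow> s < T \<Longrightarrow> (P has_real_derivative - pdx H (X s) (P s)) (at s)"
  using Z_has_vector_derivative[of s] has_vector_derivative_pair_iff[of X P _ _ s UNIV]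
  by (simp_all add: Z_def[abs_def] ham_field_def)

lemma continuous_on_X: "S \<subseteq> {0<..<T} \<Longrightarrow> continuous_on S X"
  by (intro continuous_at_imp_continuous_on ballI DERIV_isCont[OF X_has_real_derivative]) auto

lemma continuous_on_P: "S \<subseteq> {0<..<T} \<Longrightarrow> continuous_on S P"
  by (intro continuous_at_imp_continuous_on ballI DERIV_isCont[OF P_has_real_derivative]) auto

lemma eventually_in_domain: "\<forall>\<^sub>F s in at_left T. 0 < s \<and> s < T"
  unfolding eventually_at_left_field using T_pos by auto

lemma energy_conservation:
  assumes "s \<in> {0..<T}"
  shows "H (X s) (P s) = H x p"
proof -
  have d: "((\<lambda>s. H (X s) (P s)) has_real_derivative 0) (at s within {0..<T})" if s: "s \<in> {0..<T}" for s
  proof -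
    have "(X has_real_derivative pdp H (X s) (P s)) (at s within {0..<T})"
      "(P has_real_derivative - pdx H (X s) (P s)) (at s within {0..<T})"
      using solution s by (simp_all add: ham_sol_def)
    then have "((\<lambda>s. (X s, P s)) has_derivative (\<lambda>h. (pdp H (X s) (P s) * h, - pdx H (X s) (P s) * h)))
        (at s within {0..<T})"
      unfolding has_field_derivative_def by (rule has_derivative_Pair)
    from has_derivative_compose[OF this C1_on_has_derivative[OF C1_H Z_in_U[OF s, unfolded Z_def]]]
    have "((\<lambda>s. H (X s) (P s)) has_derivative
        (\<lambda>h. pdx H (X s) (P s) * (pdp H (X s) (P s) * h) + pdp H (X s) (P s) * (- pdx H (X s) (P s) * h)))
        (at s within {0..<T})" by simp
    moreover have "(\<lambda>h. pdx H (X s) (P s) * (pdp H (X s) (P s) * h) + pdp H (X s) (P s) * (- pdx H (X s) (P s) * h))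
        = (*) 0"
      by (auto simp: algebra_simps)
    ultimately show ?thesis by (simp add: has_field_derivative_def)
  qed
  obtain c where "\<forall>s\<in>{0..<T}. H (X s) (P s) = c"
    using has_field_derivative_zero_constant[OF _ d] convex_real_interval by blast
  moreover have "X 0 = x" "P 0 = p" using solution by (simp_all add: ham_sol_def)
  ultimately show ?thesis using assms T_pos by force
qed

lemma no_continuation:
  assumes lim: "(Z \<longlongrightarrow> Y 0) (at_left T)" and "0 < \<delta>"
    and Y: "\<And>t. t \<in> {0..\<delta>} \<Longrightarrow> (Y has_vector_derivative ham_field H (Y t)) (at t within {0..\<delta>}) \<and> fst (Y t) \<in> Kset b"
  shows False
proof -
  define Z' where "Z' u = (if u \<in> {0..<T} then Z u else Y (u - T))" for u
  have "Y 0 \<in> U" using Y[of 0] \<open>0 < \<delta>\<close> K_U by (cases "Y 0") auto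
  moreover have "\<forall>\<^sub>F s in at_left T. Z s \<in> U"
    unfolding eventually_at_left_field using T_pos Z_in_U by (auto intro!: exI[of _ 0])
  ultimately have limF: "((\<lambda>s. ham_field H (Z s)) \<longlongrightarrow> ham_field H (Y 0)) (at_left T)"
    by (rule continuous_on_tendsto_compose[OF continuous_on_ham_field lim])
  have YD: "\<And>t. t \<in> {0..\<delta>} \<Longrightarrow> (Y has_vector_derivative ham_field H (Y t)) (at t within {0..\<delta>})"
    using Y by blast
  have Z': "(Z' has_vector_derivative ham_field H (Z' s)) (at s within {0..<T+\<delta>})"
    if "s \<in> {0..<T+\<delta>}" for s
    unfolding Z'_def
    by (rule ode_solution_concat[where F = "ham_field H", OF T_pos \<open>0 < \<delta>\<close>
          Z_has_vector_derivative_within YD lim limF that])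
  have "ham_sol b H x p (T + \<delta>) (\<lambda>u. fst (Z' u)) (\<lambda>u. snd (Z' u))"
    unfolding ham_sol_iff
  proof (intro conjI ballI)
    show "fst (Z' 0) = x" "snd (Z' 0) = p" using solution T_pos by (simp_all add: Z'_def Z_def ham_sol_def)
    fix s assume s: "s \<in> {0..<T + \<delta>}"
    show "fst (Z' s) \<in> Kset b" using X_in_K Y s by (auto simp: Z'_def Z_def)
    show "((\<lambda>s. (fst (Z' s), snd (Z' s))) has_vector_derivative ham_field H (fst (Z' s), snd (Z' s)))
        (at s within {0..<T + \<delta>})" using Z'[OF s] by simp
  qed
  moreover have "\<forall>s\<in>{0..<T}. fst (Z' s) = X s \<and> snd (Z' s) = P s" by (simp add: Z'_def Z_def)
  ultimately show False using maxsol \<open>0 < \<delta>\<close> unfolding ham_maxsol_def by force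
qed

lemma no_interior_limit:
  assumes "(X \<longlongrightarrow> y) (at_left T)" "(P \<longlongrightarrow> q) (at_left T)" "y \<in> interior (Kset b)"
  shows False
proof -
  obtain \<rho> where "0 < \<rho>" "cball y \<rho> \<subseteq> Kset b" using assms(3) mem_interior_cball by blast
  then obtain \<delta> Y where "0 < \<delta>" "Y 0 = (y, q)"
    "\<And>t. t \<in> {0..\<delta>} \<Longrightarrow> (Y has_vector_derivative ham_field H (Y t)) (at t within {0..\<delta>}) \<and> fst (Y t) \<in> Kset b"
    by (rule local_hamiltonian_solution) blast
  moreover have "(Z \<longlongrightarrow> (y, q)) (at_left T)" using tendsto_Pair[OF assms(1,2)] by (simp add: Z_def[abs_def])
  ultimately show False using no_continuation by metis
qed

lemma P_const_of_X_const:
  assumes "0 \<le> a" "a < T" and const: "\<And>s. a < s \<Longrightarrow> s < T \<Longrightarrow> X s = e"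
  obtains c where "\<And>s. a < s \<Longrightarrow> s < T \<Longrightarrow> P s = c" "ham_field H (e, c) = 0"
proof -
  define m where "m = (a + T) / 2"
  have m: "a < m" "m < T" using assms(2) by (auto simp: m_def)
  have eK: "e \<in> Kset b" using X_in_K[of m] const[of m] m assms(1) by simp
  have X': "(X has_real_derivative 0) (at s)" if "a < s" "s < T" for s
    by (rule has_field_derivative_transform_within_open[OF DERIV_const open_greaterThanLessThan[of a T]])
       (use that const in auto)
  have pdp0: "pdp H e (P s) = 0" if "a < s" "s < T" for s
    using DERIV_unique[OF X_has_real_derivative X'] that assms(1) const by auto
  have P_const: "P s = P m" if "a < s" "s < T" for s
  proof (rule ccontr)
    assume "P s \<noteq> P m"
    then have "pdp H e (P s) \<noteq> pdp H e (P m)"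
      using pdp_strict_mono[OF eK, of "P s" "P m"] pdp_strict_mono[OF eK, of "P m" "P s"]
      by (cases "P s < P m") auto
    then show False using pdp0[OF that] pdp0[OF m] by simp
  qed
  have P': "(P has_real_derivative 0) (at m)"
  proof (rule has_field_derivative_transform_within_open[OF DERIV_const open_greaterThanLessThan[of a T]])
    show "m \<in> {a<..<T}" using m by simp
    fix s assume "s \<in> {a<..<T}"
    then show "P m = P s" using P_const[of s] by simp
  qed
  have "pdx H e (P m) = 0"
    using DERIV_unique[OF P_has_real_derivative P'] m assms(1) const by auto
  then show ?thesis using that[OF P_const] pdp0[OF m] by (simp add: ham_field_def zero_prod_def)
qed

lemma no_stationary_tail:
  assumes "s0 < T" and const: "\<And>s. s0 < s \<Longrightarrow> s < T \<Longrightarrow> X s = e"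
  shows False
proof -
  define a where "a = max s0 0"
  have a: "0 \<le> a" "a < T" using assms(1) T_pos by (auto simp: a_def)
  obtain c where c: "\<And>s. a < s \<Longrightarrow> s < T \<Longrightarrow> P s = c" and rest: "ham_field H (e, c) = 0"
    using P_const_of_X_const[OF a] const by (auto simp: a_def)
  have "s0 < (a + T) / 2" "0 \<le> (a + T) / 2" "(a + T) / 2 < T" using a by (auto simp: a_def)
  then have eK: "e \<in> Kset b" using X_in_K[of "(a + T) / 2"] const[of "(a + T) / 2"] by simp
  have "\<forall>\<^sub>F s in at_left T. a < s \<and> s < T"
    unfolding eventually_at_left_field using a by auto
  then have "\<forall>\<^sub>F s in at_left T. Z s = (e, c)"
    by eventually_elim (use const c in \<open>simp add: Z_def a_def\<close>)
  then have "(Z \<longlongrightarrow> (e, c)) (at_left T)" by (rule tendsto_eventually)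
  then show False
    by (rule no_continuation[where \<delta> = 1 and Y = "\<lambda>_. (e, c)"]) (use eK rest in simp_all)
qed

text \<open>Near \<open>-1\<close>, condition (H4) pushes the minimiser of \<open>H y\<close> below the limiting momentum, so
  \<open>X\<close> is nondecreasing close to \<open>T\<close>; converging to its lower bound \<open>-1\<close>, it must rest there.\<close>
lemma no_lower_end_limit:
  assumes b and limX: "(X \<longlongrightarrow> -1) (at_left T)" and limP: "(P \<longlongrightarrow> q) (at_left T)"
  shows False
proof -
  have K: "Kset b = {-1..1}" using \<open>b\<close> by (simp add: Kset_def)
  have "\<forall>\<^sub>F y in at (-1) within {-1..1}. argmin_H y \<le> q - 1"
    using argmin_H_lower \<open>b\<close> by (simp add: lowerF_def filterlim_at_bot)
  then obtain d where d: "0 < d" "\<And>y. y \<in> {-1..1} \<Longrightarrow> y \<noteq> -1 \<Longrightarrow> dist y (-1) < d \<Longrightarrow> argmin_H y \<le> q - 1"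
    unfolding eventually_at by blast
  have "\<forall>\<^sub>F s in at_left T. dist (X s) (-1) < min d 1 \<and> dist (P s) q < 1"
    using tendstoD[OF limX, of "min d 1"] tendstoD[OF limP, of 1] d(1)
    by (auto intro!: eventually_conj simp del: min_less_iff_conj)
  then obtain c' where c': "c' < T" "\<And>s. c' < s \<Longrightarrow> s < T \<Longrightarrow> dist (X s) (-1) < min d 1 \<and> dist (P s) q < 1"
    unfolding eventually_at_left_field by blast
  define c where "c = max c' 0"
  have c: "0 \<le> c" "c < T" "\<And>s. c < s \<Longrightarrow> s < T \<Longrightarrow> dist (X s) (-1) < min d 1 \<and> dist (P s) q < 1"
    using c' T_pos by (auto simp: c_def)
  have X_ge: "-1 \<le> X s" if "0 \<le> s" "s < T" for s using X_in_K[of s] that K by auto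
  have pdp_nonneg: "0 \<le> pdp H (X s) (P s)" if s: "c < s" "s < T" for s
  proof (cases "X s = -1")
    case True
    have "\<forall>u. \<bar>s - u\<bar> < min s (T - s) \<longrightarrow> X s \<le> X u" using X_ge True s c by auto
    then show ?thesis
      using DERIV_local_min[OF X_has_real_derivative, of s "min s (T - s)"] s c by auto
  next
    case False
    then have "X s \<in> interior (Kset b)" using c(3)[OF s] X_ge[of s] s c by (auto simp: K dist_real_def)
    moreover have "argmin_H (X s) \<le> q - 1" "\<bar>P s - q\<bar> < 1"
      using d(2)[of "X s"] c(3)[OF s] X_ge[of s] s c False by (auto simp: dist_real_def)
    then have "argmin_H (X s) < P s" by linarith
    ultimately show ?thesis using pdp_pos_iff by (simp add: less_imp_le)
  qed
  have "X s = -1" if "c < s" "s < T" for s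
  proof (rule eq_tendsto_of_deriv_nonneg[OF _ limX _ that])
    fix u assume u: "c < u" "u < T"
    then show "(X has_real_derivative pdp H (X u) (P u)) (at u) \<and> 0 \<le> pdp H (X u) (P u)"
      using X_has_real_derivative[of u] pdp_nonneg[OF u] c by simp
    show "-1 \<le> X u" using X_ge[of u] u c by simp
  qed
  then show False using no_stationary_tail[OF c(2)] by blast
qed

lemma no_upper_end_limit:
  assumes b and limX: "(X \<longlongrightarrow> 1) (at_left T)" and limP: "(P \<longlongrightarrow> q) (at_left T)"
  shows False
proof -
  have K: "Kset b = {-1..1}" using \<open>b\<close> by (simp add: Kset_def)
  have "\<forall>\<^sub>F y in at 1 within {-1..1}. q + 1 \<le> argmin_H y"
    using argmin_H_upper \<open>b\<close> by (simp add: upperF_def filterlim_at_top)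
  then obtain d where d: "0 < d" "\<And>y. y \<in> {-1..1} \<Longrightarrow> y \<noteq> 1 \<Longrightarrow> dist y 1 < d \<Longrightarrow> q + 1 \<le> argmin_H y"
    unfolding eventually_at by blast
  have "\<forall>\<^sub>F s in at_left T. dist (X s) 1 < min d 1 \<and> dist (P s) q < 1"
    using tendstoD[OF limX, of "min d 1"] tendstoD[OF limP, of 1] d(1)
    by (auto intro!: eventually_conj simp del: min_less_iff_conj)
  then obtain c' where c': "c' < T" "\<And>s. c' < s \<Longrightarrow> s < T \<Longrightarrow> dist (X s) 1 < min d 1 \<and> dist (P s) q < 1"
    unfolding eventually_at_left_field by blast
  define c where "c = max c' 0"
  have c: "0 \<le> c" "c < T" "\<And>s. c < s \<Longrightarrow> s < T \<Longrightarrow> dist (X s) 1 < min d 1 \<and> dist (P s) q < 1"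
    using c' T_pos by (auto simp: c_def)
  have X_le: "X s \<le> 1" if "0 \<le> s" "s < T" for s using X_in_K[of s] that K by auto
  have pdp_nonpos: "0 \<le> - pdp H (X s) (P s)" if s: "c < s" "s < T" for s
  proof (cases "X s = 1")
    case True
    have "\<forall>u. \<bar>s - u\<bar> < min s (T - s) \<longrightarrow> - X s \<le> - X u" using X_le True s c by auto
    then show ?thesis
      using DERIV_local_min[OF DERIV_minus[OF X_has_real_derivative], of s "min s (T - s)"] s c by auto
  next
    case False
    then have "X s \<in> interior (Kset b)" using c(3)[OF s] X_le[of s] s c by (auto simp: K dist_real_def)
    moreover have "q + 1 \<le> argmin_H (X s)" "\<bar>P s - q\<bar> < 1"
      using d(2)[of "X s"] c(3)[OF s] X_le[of s] s c False by (auto simp: dist_real_def)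
    then have "P s < argmin_H (X s)" by linarith
    ultimately show ?thesis using pdp_neg_iff by (simp add: less_imp_le)
  qed
  have "- X s = - 1" if "c < s" "s < T" for s
  proof (rule eq_tendsto_of_deriv_nonneg[OF _ tendsto_minus[OF limX] _ that])
    fix u assume u: "c < u" "u < T"
    then show "((\<lambda>s. - X s) has_real_derivative - pdp H (X u) (P u)) (at u) \<and> 0 \<le> - pdp H (X u) (P u)"
      using DERIV_minus[OF X_has_real_derivative[of u]] pdp_nonpos[OF u] c by simp
    show "- 1 \<le> - X u" using X_le[of u] u c by simp
  qed
  then show False using no_stationary_tail[OF c(2), of 1] by simp
qed

lemma no_limit:
  assumes limX: "(X \<longlongrightarrow> y) (at_left T)" and limP: "(P \<longlongrightarrow> q) (at_left T)"
  shows False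
proof -
  have "\<forall>\<^sub>F s in at_left T. X s \<in> Kset b"
    unfolding eventually_at_left_field using T_pos X_in_K by (auto intro!: exI[of _ 0])
  then have "y \<in> Kset b" using closed_K limX by (auto intro: Lim_in_closed_set)
  then consider "y \<in> interior (Kset b)" | "b" "y = -1" | "b" "y = 1"
    by (cases b; cases "y = -1"; cases "y = 1") (auto simp: Kset_def)
  then show False
    by cases (use no_interior_limit no_lower_end_limit no_upper_end_limit limX limP in blast)+
qed

lemma norm_Z_diff_ge: "\<bar>X t - X s\<bar> \<le> norm (Z t - Z s)" "\<bar>P t - P s\<bar> \<le> norm (Z t - Z s)"
  using norm_fst_le[of "X t - X s" "P t - P s"] norm_snd_le[of "P t - P s" "X t - X s"]
  by (simp_all add: Z_def)

lemma continuous_on_Z: "S \<subseteq> {0<..<T} \<Longrightarrow> continuous_on S Z"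
  by (intro continuous_at_imp_continuous_on ballI has_vector_derivative_continuous[OF Z_has_vector_derivative]) auto

lemma Z_speed_bounded:
  obtains V where "0 < V" "\<And>s. 0 < s \<Longrightarrow> s < T \<Longrightarrow> \<bar>X s\<bar> \<le> A \<Longrightarrow> \<bar>P s\<bar> \<le> M \<Longrightarrow>
    (Z has_vector_derivative ham_field H (Z s)) (at s) \<and> norm (ham_field H (Z s)) \<le> V"
proof -
  obtain V where V: "0 < V"
    "\<And>y q. y \<in> Kset b \<Longrightarrow> \<bar>y\<bar> \<le> A \<Longrightarrow> \<bar>q\<bar> \<le> M \<Longrightarrow> norm (ham_field H (y, q)) \<le> V"
    using ham_field_bounded by blast
  show ?thesis
    by (rule that[OF V(1)]) (use Z_has_vector_derivative V(2)[OF X_in_K] in \<open>simp add: Z_def\<close>)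
qed

lemma not_eventually_in_box: "\<not> (\<forall>\<^sub>F s in at_left T. \<bar>X s\<bar> \<le> A \<and> \<bar>P s\<bar> \<le> M)"
proof
  assume "\<forall>\<^sub>F s in at_left T. \<bar>X s\<bar> \<le> A \<and> \<bar>P s\<bar> \<le> M"
  then obtain c where c: "c < T" "\<And>s. c < s \<Longrightarrow> s < T \<Longrightarrow> \<bar>X s\<bar> \<le> A \<and> \<bar>P s\<bar> \<le> M"
    unfolding eventually_at_left_field by blast
  obtain V where V: "\<And>s. 0 < s \<Longrightarrow> s < T \<Longrightarrow> \<bar>X s\<bar> \<le> A \<Longrightarrow> \<bar>P s\<bar> \<le> M \<Longrightarrow>
    (Z has_vector_derivative ham_field H (Z s)) (at s) \<and> norm (ham_field H (Z s)) \<le> V"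
    using Z_speed_bounded by blast
  have "max c 0 < T" using c(1) T_pos by simp
  then obtain l where "(Z \<longlongrightarrow> l) (at_left T)"
  proof (rule tendsto_at_left_of_bounded_derivative)
    fix t assume "max c 0 < t" "t < T"
    then show "(Z has_vector_derivative ham_field H (Z t)) (at t) \<and> norm (ham_field H (Z t)) \<le> V"
      using V[of t] c(2)[of t] by simp
  qed
  from tendsto_fst[OF this] tendsto_snd[OF this]
  have "(X \<longlongrightarrow> fst l) (at_left T)" "(P \<longlongrightarrow> snd l) (at_left T)" by (simp_all add: Z_def)
  then show False by (rule no_limit)
qed

text \<open>Returning infinitely often to a box while not staying in the box enlarged by \<open>1\<close> would
  require crossing the gap between the two boxes, at bounded speed, in arbitrarily short time.\<close>
lemma eventually_outside_box: "\<forall>\<^sub>F s in at_left T. \<not> (\<bar>X s\<bar> \<le> A \<and> \<bar>P s\<bar> \<le> M)"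
proof (rule ccontr)
  assume returns: "\<not> ?thesis"
  obtain V where V: "0 < V" "\<And>s. 0 < s \<Longrightarrow> s < T \<Longrightarrow> \<bar>X s\<bar> \<le> A + 1 \<Longrightarrow> \<bar>P s\<bar> \<le> M + 1 \<Longrightarrow>
    (Z has_vector_derivative ham_field H (Z s)) (at s) \<and> norm (ham_field H (Z s)) \<le> V"
    using Z_speed_bounded by blast
  define c where "c = max (T - 1 / (2 * V)) 0"
  have "c < T" using T_pos V(1) by (simp add: c_def)
  then obtain s1 where s1: "c < s1" "s1 < T" "\<bar>X s1\<bar> \<le> A" "\<bar>P s1\<bar> \<le> M"
    using returns unfolding eventually_at_left_field by blast
  then obtain s2 where s2: "s1 < s2" "s2 < T" "\<not> (\<bar>X s2\<bar> \<le> A + 1 \<and> \<bar>P s2\<bar> \<le> M + 1)"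
    using not_eventually_in_box[of "A + 1" "M + 1"] unfolding eventually_at_left_field by blast
  have "1 \<le> V * (s2 - s1)"
  proof (rule crossing_time_lower_bound[where z' = "\<lambda>s. ham_field H (Z s)"])
    show "continuous_on {s1..s2} Z" using s1 s2 c_def by (intro continuous_on_Z) auto
    show "1 \<le> norm (Z s2 - Z s1)" using s1 s2 norm_Z_diff_ge[of s2 s1] by auto
    fix t assume t: "s1 < t" "t < s2" "norm (Z t - Z s1) < 1"
    have "\<bar>X t\<bar> \<le> A + 1" "\<bar>P t\<bar> \<le> M + 1"
      using t(3) norm_Z_diff_ge[of t s1] s1(3,4) by linarith+
    moreover have "0 < t" "t < T" using t s1 s2 by (auto simp: c_def)
    ultimately show "(Z has_vector_derivative ham_field H (Z t)) (at t) \<and> norm (ham_field H (Z t)) \<le> V"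
      using V(2) by blast
  qed (use s2 in auto)
  also have "V * (s2 - s1) < V * (1 / (2 * V))"
    using s1 s2 V(1) by (intro mult_strict_left_mono) (auto simp: c_def)
  finally show False using V(1) by simp
qed

lemma X_tendsto_upper_end:
  assumes b and P_top: "filterlim P at_top (at_left T)"
  shows "(X \<longlongrightarrow> 1) (at_left T)"
proof (rule tendstoI)
  fix \<epsilon> :: real assume "0 < \<epsilon>"
  obtain Q where Q: "\<And>y r. y \<in> {-1..1-\<epsilon>} \<Longrightarrow> Q \<le> r \<Longrightarrow> H x p < H y r"
    using H_gt_off_upper_end[OF \<open>b\<close> \<open>0 < \<epsilon>\<close>] by blast
  have "\<forall>\<^sub>F s in at_left T. Q \<le> P s" using P_top by (simp add: filterlim_at_top)
  with eventually_in_domain show "\<forall>\<^sub>F s in at_left T. dist (X s) 1 < \<epsilon>"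
  proof eventually_elim
    case (elim s)
    then have "X s \<in> {-1..1}" "H (X s) (P s) = H x p"
      using X_in_K[of s] energy_conservation[of s] \<open>b\<close> by (auto simp: Kset_def)
    moreover from this have "\<not> X s \<le> 1 - \<epsilon>" using Q[of "X s" "P s"] elim by auto
    ultimately show ?case by (simp add: dist_real_def)
  qed
qed

lemma X_tendsto_lower_end:
  assumes b and P_bot: "filterlim P at_bot (at_left T)"
  shows "(X \<longlongrightarrow> -1) (at_left T)"
proof (rule tendstoI)
  fix \<epsilon> :: real assume "0 < \<epsilon>"
  obtain Q where Q: "\<And>y r. y \<in> {-1+\<epsilon>..1} \<Longrightarrow> r \<le> Q \<Longrightarrow> H x p < H y r"
    using H_gt_off_lower_end[OF \<open>b\<close> \<open>0 < \<epsilon>\<close>] by blast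
  have "\<forall>\<^sub>F s in at_left T. P s \<le> Q" using P_bot by (simp add: filterlim_at_bot)
  with eventually_in_domain show "\<forall>\<^sub>F s in at_left T. dist (X s) (-1) < \<epsilon>"
  proof eventually_elim
    case (elim s)
    then have "X s \<in> {-1..1}" "H (X s) (P s) = H x p"
      using X_in_K[of s] energy_conservation[of s] \<open>b\<close> by (auto simp: Kset_def)
    moreover from this have "\<not> -1 + \<epsilon> \<le> X s" using Q[of "X s" "P s"] elim by auto
    ultimately show ?case by (simp add: dist_real_def)
  qed
qed

lemma compact_case:
  assumes b
  shows "((X \<longlongrightarrow> -1) (at_left T) \<and> filterlim P at_bot (at_left T))
       \<or> ((X \<longlongrightarrow> 1) (at_left T) \<and> filterlim P at_top (at_left T))"
proof -
  have "\<forall>\<^sub>F s in at_left T. M < \<bar>P s\<bar>" for M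
    using eventually_outside_box[of 1 M] eventually_in_domain
  proof eventually_elim
    case (elim s)
    then show ?case using X_in_K[of s] \<open>b\<close> by (auto simp: Kset_def)
  qed
  then have "filterlim P at_top (at_left T) \<or> filterlim P at_bot (at_left T)"
    using T_pos continuous_on_P by (intro filterlim_at_top_or_at_bot_at_left) auto
  then show ?thesis using X_tendsto_upper_end X_tendsto_lower_end \<open>b\<close> by blast
qed

lemma pdx_lipschitz_along:
  assumes "0 < a" "c < T"
  obtains L where "\<And>t. t \<in> {a..c} \<Longrightarrow> \<bar>pdx H (X t) (P t) - pdx H (X t) q\<bar> \<le> L * \<bar>P t - q\<bar>"
proof -
  have "compact (Z ` {a..c})" using assms by (intro compact_continuous_image continuous_on_Z) auto
  then obtain R where R: "\<And>t. t \<in> {a..c} \<Longrightarrow> norm (Z t) \<le> R"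
    using compact_imp_bounded bounded_pos by (metis image_eqI)
  define B where "B = ({-R..R} \<inter> Kset b) \<times> {-(R + \<bar>q\<bar>)..R + \<bar>q\<bar>}"
  have "convex B" "compact B" "B \<subseteq> U"
    unfolding B_def using K_U
    by (auto intro!: convex_Times convex_Int compact_Times compact_Int_closed convex_K closed_K)
  then obtain L where L: "L-lipschitz_on B (\<lambda>w. pdx H (fst w) (snd w))"
    using C1_on_lipschitz[OF C1_pdx] by blast
  show ?thesis
  proof (rule that[of L])
    fix t assume t: "t \<in> {a..c}"
    have "\<bar>X t\<bar> \<le> R" "\<bar>P t\<bar> \<le> R" using R[OF t] norm_fst_le[of "X t" "P t"] norm_snd_le[of "P t" "X t"]
      by (auto simp: Z_def)
    moreover have "X t \<in> Kset b" using X_in_K t assms by auto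
    ultimately have "(X t, P t) \<in> B" "(X t, q) \<in> B" by (auto simp: B_def abs_le_iff)
    then show "\<bar>pdx H (X t) (P t) - pdx H (X t) q\<bar> \<le> L * \<bar>P t - q\<bar>"
      using lipschitz_onD[OF L] by (fastforce simp: dist_norm norm_Pair)
  qed
qed

lemma P_stays_above:
  assumes "0 < s0" "s0 < s" "s < T" and "q \<le> P s0" and push: "\<And>t. s0 \<le> t \<Longrightarrow> t \<le> s \<Longrightarrow> 0 \<le> - pdx H (X t) q"
  shows "q \<le> P s"
proof -
  obtain L where L: "\<And>t. t \<in> {s0..s} \<Longrightarrow> \<bar>pdx H (X t) (P t) - pdx H (X t) q\<bar> \<le> L * \<bar>P t - q\<bar>"
    using pdx_lipschitz_along[OF assms(1,3)] by blast
  show ?thesis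
  proof (rule constant_lower_barrier[where G = "\<lambda>t r. - pdx H (X t) r" and L = L, OF \<open>s0 < s\<close>])
    show "continuous_on {s0..s} P" using assms by (intro continuous_on_P) auto
    fix t assume t: "s0 < t" "t < s"
    show "(P has_real_derivative - pdx H (X t) (P t)) (at t)" using P_has_real_derivative t assms by simp
    show "0 \<le> - pdx H (X t) q" using push t by simp
    assume "P t < q"
    then show "- pdx H (X t) q - - pdx H (X t) (P t) \<le> L * (q - P t)" using L[of t] t by auto
  qed fact
qed

lemma P_stays_below:
  assumes "0 < s0" "s0 < s" "s < T" and "P s0 \<le> q" and push: "\<And>t. s0 \<le> t \<Longrightarrow> t \<le> s \<Longrightarrow> - pdx H (X t) q \<le> 0"
  shows "P s \<le> q"
proof -
  obtain L where L: "\<And>t. t \<in> {s0..s} \<Longrightarrow> \<bar>pdx H (X t) (P t) - pdx H (X t) q\<bar> \<le> L * \<bar>P t - q\<bar>"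
    using pdx_lipschitz_along[OF assms(1,3)] by blast
  show ?thesis
  proof (rule constant_upper_barrier[where G = "\<lambda>t r. - pdx H (X t) r" and L = L, OF \<open>s0 < s\<close>])
    show "continuous_on {s0..s} P" using assms by (intro continuous_on_P) auto
    fix t assume t: "s0 < t" "t < s"
    show "(P has_real_derivative - pdx H (X t) (P t)) (at t)" using P_has_real_derivative t assms by simp
    show "- pdx H (X t) q \<le> 0" using push t by simp
    assume "q < P t"
    then show "- pdx H (X t) (P t) - - pdx H (X t) q \<le> L * (P t - q)" using L[of t] t by auto
  qed fact
qed

text \<open>Since \<open>X\<close> increases at times arbitrarily close to \<open>T\<close>, the momentum exceeds the minimiser of
  \<open>H (X s)\<close>, which is at least \<open>q0\<close> far out by (H4); from then on the sign of \<open>- pdx H\<close> makes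
  \<open>q0\<close> a barrier.\<close>
lemma eventually_P_ge_of_X_at_top:
  assumes "\<not> b" and X_top: "filterlim X at_top (at_left T)"
    and push: "\<And>z. y0 \<le> z \<Longrightarrow> 0 \<le> - pdx H z q0"
  shows "\<forall>\<^sub>F s in at_left T. q0 \<le> P s"
proof -
  have int: "interior (Kset b) = UNIV" using \<open>\<not> b\<close> by (simp add: Kset_def)
  have "\<forall>\<^sub>F z in at_top. q0 \<le> argmin_H z"
    using argmin_H_upper \<open>\<not> b\<close> by (simp add: upperF_def filterlim_at_top)
  then obtain B where B: "\<And>z. B \<le> z \<Longrightarrow> q0 \<le> argmin_H z" by (auto simp: eventually_at_top_linorder)
  have "\<forall>\<^sub>F s in at_left T. max B y0 \<le> X s"
    using X_top unfolding filterlim_at_top by (simp del: max.bounded_iff)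
  from eventually_conj[OF this eventually_in_domain]
  obtain a where a: "a < T" "\<And>s. a < s \<Longrightarrow> s < T \<Longrightarrow> max B y0 \<le> X s \<and> 0 < s"
    unfolding eventually_at_left_field by blast
  have "\<And>s. a < s \<Longrightarrow> s < T \<Longrightarrow> (X has_real_derivative pdp H (X s) (P s)) (at s)"
    using X_has_real_derivative a(2) by blast
  from exists_pos_deriv_of_filterlim_at_top[OF a(1) this X_top]
  obtain s0 where s0: "a < s0" "s0 < T" "0 < pdp H (X s0) (P s0)" by auto
  then have "argmin_H (X s0) < P s0" using pdp_pos_iff int by simp
  moreover have "q0 \<le> argmin_H (X s0)" using B a(2)[OF s0(1,2)] by simp
  ultimately have start: "q0 \<le> P s0" by simp
  have "q0 \<le> P s" if "s0 < s" "s < T" for s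
  proof (rule P_stays_above[OF _ that start])
    show "0 < s0" using a(2)[OF s0(1,2)] by simp
    fix t assume "s0 \<le> t" "t \<le> s"
    then show "0 \<le> - pdx H (X t) q0" using push a(2)[of t] s0 that by simp
  qed
  then show ?thesis unfolding eventually_at_left_field using s0 by blast
qed

lemma eventually_P_le_of_X_at_bot:
  assumes "\<not> b" and X_bot: "filterlim X at_bot (at_left T)"
    and push: "\<And>z. z \<le> y0 \<Longrightarrow> - pdx H z q0 \<le> 0"
  shows "\<forall>\<^sub>F s in at_left T. P s \<le> q0"
proof -
  have int: "interior (Kset b) = UNIV" using \<open>\<not> b\<close> by (simp add: Kset_def)
  have "\<forall>\<^sub>F z in at_bot. argmin_H z \<le> q0"
    using argmin_H_lower \<open>\<not> b\<close> by (simp add: lowerF_def filterlim_at_bot)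
  then obtain B where B: "\<And>z. z \<le> B \<Longrightarrow> argmin_H z \<le> q0" by (auto simp: eventually_at_bot_linorder)
  have "\<forall>\<^sub>F s in at_left T. X s \<le> min B y0"
    using X_bot unfolding filterlim_at_bot by (simp del: min.bounded_iff)
  from eventually_conj[OF this eventually_in_domain]
  obtain a where a: "a < T" "\<And>s. a < s \<Longrightarrow> s < T \<Longrightarrow> X s \<le> min B y0 \<and> 0 < s"
    unfolding eventually_at_left_field by blast
  have "\<And>s. a < s \<Longrightarrow> s < T \<Longrightarrow> ((\<lambda>s. - X s) has_real_derivative - pdp H (X s) (P s)) (at s)"
    using DERIV_minus[OF X_has_real_derivative] a(2) by blast
  moreover have "filterlim (\<lambda>s. - X s) at_top (at_left T)"
    using X_bot by (simp add: filterlim_uminus_at_top)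
  ultimately have "\<exists>s\<in>{a<..<T}. 0 < - pdp H (X s) (P s)"
    by (rule exists_pos_deriv_of_filterlim_at_top[OF a(1)])
  then obtain s0 where s0: "a < s0" "s0 < T" "0 < - pdp H (X s0) (P s0)" by auto
  then have "P s0 < argmin_H (X s0)" using pdp_neg_iff int by simp
  moreover have "argmin_H (X s0) \<le> q0" using B a(2)[OF s0(1,2)] by simp
  ultimately have start: "P s0 \<le> q0" by simp
  have "P s \<le> q0" if "s0 < s" "s < T" for s
  proof (rule P_stays_below[OF _ that start])
    show "0 < s0" using a(2)[OF s0(1,2)] by simp
    fix t assume "s0 \<le> t" "t \<le> s"
    then show "- pdx H (X t) q0 \<le> 0" using push a(2)[of t] s0 that by simp
  qed
  then show ?thesis unfolding eventually_at_left_field using s0 by blast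
qed

lemma P_at_top_of_X_at_top:
  assumes "\<not> b" and X_top: "filterlim X at_top (at_left T)"
  shows "filterlim P at_top (at_left T)"
  unfolding filterlim_at_top
proof
  fix W
  have "\<exists>y q :: nat \<Rightarrow> real. filterlim q at_top sequentially \<and>
      (\<forall>n. \<forall>z\<in>Kset b. y n \<le> z \<longrightarrow> 0 \<le> - pdx H z (q n))"
    using cond unfolding conditionH_def condH5_def by blast
  then obtain y q :: "nat \<Rightarrow> real" where q: "filterlim q at_top sequentially"
    and push: "\<And>n z. y n \<le> z \<Longrightarrow> 0 \<le> - pdx H z (q n)"
    using \<open>\<not> b\<close> by (auto simp: Kset_def)
  obtain n where n: "W \<le> q n" using q unfolding filterlim_at_top eventually_sequentially by blast
  have "\<forall>\<^sub>F s in at_left T. q n \<le> P s" by (rule eventually_P_ge_of_X_at_top[OF \<open>\<not> b\<close> X_top push])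
  then show "\<forall>\<^sub>F s in at_left T. W \<le> P s" by eventually_elim (use n in linarith)
qed

lemma P_at_bot_of_X_at_bot:
  assumes "\<not> b" and X_bot: "filterlim X at_bot (at_left T)"
  shows "filterlim P at_bot (at_left T)"
  unfolding filterlim_at_bot
proof
  fix W
  have "\<exists>y q :: nat \<Rightarrow> real. filterlim q at_bot sequentially \<and>
      (\<forall>n. \<forall>z\<in>Kset b. z \<le> y n \<longrightarrow> - pdx H z (q n) \<le> 0)"
    using cond unfolding conditionH_def condH5_def by blast
  then obtain y q :: "nat \<Rightarrow> real" where q: "filterlim q at_bot sequentially"
    and push: "\<And>n z. z \<le> y n \<Longrightarrow> - pdx H z (q n) \<le> 0"
    using \<open>\<not> b\<close> by (auto simp: Kset_def)
  obtain n where n: "q n \<le> W" using q unfolding filterlim_at_bot eventually_sequentially by blast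
  have "\<forall>\<^sub>F s in at_left T. P s \<le> q n" by (rule eventually_P_le_of_X_at_bot[OF \<open>\<not> b\<close> X_bot push])
  then show "\<forall>\<^sub>F s in at_left T. P s \<le> W" by eventually_elim (use n in linarith)
qed

lemma noncompact_case:
  assumes "\<not> b"
  shows "(filterlim X at_bot (at_left T) \<and> filterlim P at_bot (at_left T))
       \<or> (filterlim X at_top (at_left T) \<and> filterlim P at_top (at_left T))"
proof -
  have "\<forall>\<^sub>F s in at_left T. A < \<bar>X s\<bar>" for A
  proof -
    obtain Q where Q: "0 \<le> Q" "\<And>y r. y \<in> {-\<bar>A\<bar>..\<bar>A\<bar>} \<Longrightarrow> Q \<le> \<bar>r\<bar> \<Longrightarrow> H x p < H y r"
      using H_gt_of_large_momentum[of "-\<bar>A\<bar>" "\<bar>A\<bar>"] \<open>\<not> b\<close> by (auto simp: Kset_def)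
    from eventually_outside_box[of "\<bar>A\<bar>" Q] eventually_in_domain
    show ?thesis
    proof eventually_elim
      case (elim s)
      then show ?case using Q(2)[of "X s" "P s"] energy_conservation[of s] by fastforce
    qed
  qed
  then have "filterlim X at_top (at_left T) \<or> filterlim X at_bot (at_left T)"
    using T_pos continuous_on_X by (intro filterlim_at_top_or_at_bot_at_left) auto
  then show ?thesis using P_at_top_of_X_at_top P_at_bot_of_X_at_bot \<open>\<not> b\<close> by blast
qed

end

lemma conditionH_C2_neighbourhood:
  assumes "conditionH b H"
  obtains U where "open U" "\<And>y q. y \<in> Kset b \<Longrightarrow> (y, q) \<in> U" "C2_on U H"
proof (cases b)
  case True
  then obtain \<epsilon> where "0 < \<epsilon>" "C2_on ({-1-\<epsilon><..<1+\<epsilon>} \<times> UNIV) H"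
    using assms by (auto simp: conditionH_def condH1_def)
  then show ?thesis
    using that[of "{-1-\<epsilon><..<1+\<epsilon>} \<times> UNIV"] True by (auto simp: Kset_def open_Times)
next
  case False
  then show ?thesis using that[of UNIV] assms by (auto simp: conditionH_def condH1_def)
qed

theorem mainTheorem10:
  fixes b :: bool and H :: "real \<Rightarrow> real \<Rightarrow> real"
    and x p T :: real and X P :: "real \<Rightarrow> real"
  assumes "conditionH b H"
    and "x \<in> Kset b"
    and "ham_maxsol b H x p T X P"
  shows "(filterlim X (lowerLim b) (at T within {0..<T}) \<and> filterlim P at_bot (at T within {0..<T}))
       \<or> (filterlim X (upperLim b) (at T within {0..<T}) \<and> filterlim P at_top (at T within {0..<T}))"
proof (cases "0 < T")
  case False
  then show ?thesis by (simp add: filterlim_def)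
next
  case True
  obtain U where "open U" "\<And>y q. y \<in> Kset b \<Longrightarrow> (y, q) \<in> U" "C2_on U H"
    using conditionH_C2_neighbourhood[OF assms(1)] by blast
  then interpret maximal_solution b H U x p T X P
    using assms(1,3) True by unfold_locales
  have "at T within {0..<T} = at_left T"
    by (rule at_within_nhd[of _ "{0<..}"]) (use True in auto)
  then show ?thesis
    using compact_case noncompact_case by (cases b) (auto simp: lowerLim_def upperLim_def)
qed

end
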